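(* Let $A$ be an $N$-homogeneous algebra with a side-confluent presentation $\langle X\mid R\rangle$, $X$ a finite totally ordered set. (1) For every integer $m$, the restriction of $\phi$ to $V^{\otimes m}$ is a reduction operator relatively to $X^{(m)}$ whose kernel is $I(R)_m$. (2) For every integer $n\geq1$, $\partial'_n$ is the restriction to $\mathrm{im}(\phi)\otimes J_n$ of the linear map $\bigoplus_{m\geq l_N(n)}V^{\otimes m}\to T(V)$ whose restriction to $V^{\otimes m}$ is $\phi|_{V^{\otimes m-l_N(n-1)}}\otimes\mathrm{id}_{V^{\otimes l_N(n-1)}}$.
   Context: $\mathbb{K}$ is a field, $N\geq2$. $X^{(m)}$ is the set of words of length $m$, $V=\mathbb{K}X$, $V^{\otimes m}=\mathbb{K}X^{(m)}$, $T(V)$ the free algebra. $N$-homogeneous presentation: $R\subset V^{\otimes N}$, $A\cong T(V)/I(R)$, $\overline R=\mathrm{span}(R)$, $I(R)_m=0$ ($m<N$), $I(R)_m=\sum_{i=0}^{m-N}V^{\otimes i}\otimes\overline R\otimes V^{\otimes m-N-i}$ ($m\geq N$); $\overline f$ is the image of $f$ in $A$. $X^{(m)}$ lexicographically ordered, $\mathrm{lm}(f)$ greatest word in $f\neq0$. Conventions: leading coefficients in $R$ are $1$; a word is a normal form if it has no factor $\mathrm{lm}(f)$, $f\in R$, an element is a normal form if it is a combination of such words; the presentation is reduced. Operator $S(\mathrm{lm}(f))=\mathrm{lm}(f)-f$ ($f\in R$), $S(w)=w$ otherwise; $\langle t,s\rangle^k=\cdots sts$ ($k$ factors); side-confluent: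 for each $1\leq m\leq N-1$ some $k$ gives $\langle\mathrm{id}_{V^{\otimes m}}\otimes S,S\otimes\mathrm{id}_{V^{\otimes m}}\rangle^k=\langle S\otimes\mathrm{id}_{V^{\otimes m}},\mathrm{id}_{V^{\otimes m}}\otimes S\rangle^k$. Then each $f\in T(V)$ has a unique normal form $\widehat f$ reachable by finitely many reductions (replacing $w_1\mathrm{lm}(g)w_2$, $g\in R$, by $w_1(\mathrm{lm}(g)-g)w_2$), and $f\in I(R)\iff\widehat f=0$. $\phi:T(V)\to T(V)$, $f\mapsto\widehat f$; $\overline\phi:A\to\mathrm{im}(\phi)$, $\overline f\mapsto\widehat f$, is a linear isomorphism. A reduction operator relatively to a finite totally ordered set $Y$ is a linear projector $T$ of $\mathbb{K}Y$ with $T(y)=y$ or $T(y)$ a combination of elements strictly smaller than $y$, for each $y$. Koszul complex: $l_N(2k)=kN$, $l_N(2k+1)=kN+1$; $J_0=\mathbb{K}$, $J_1=V$, $J_2=\overline R$, $J_n=\bigcap_{i=0}^{l_N(n)-N}V^{\otimes i}\otimes\overline R\otimes V^{\otimes l_N(n)-N-i}$ ($n\geq3$); $\partial_n:A\otimes J_n\to A\otimes J_{n-1}$ is the restriction of the left $A$-linear map $1_A\otimes w_1w_2\mapsto\overline{w_1}\otimes w_2$ ($|w_1|=l_N(n)-l_N(n-1)$, $|w_2|=l_N(n-1)$). With $\phi_n=\overline\phi\otimes\mathrm{id}_{J_n}:A\otimes J_n\to\mathrm{im}(\phi)\otimes J_n$ (viewed in $T(V)$ by concatenation), the normalised Koszul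 complex has differentials $\partial'_n=\phi_{n-1}\circ\partial_n\circ\phi_n^{-1}$. *)

theory Defs
  imports Main "HOL-Library.List_Lexorder"
begin

(* Words over the finite totally ordered alphabet 'x are lists; X^{(m)} is words m.
   Words of equal length are compared lexicographically (List_Lexorder).
   An element of T(V) is a finitely supported function 'x list => 'k. *)

type_synonym ('x,'k) tv = "'x list \<Rightarrow> 'k"

definition words :: "nat \<Rightarrow> 'x list set" where
  "words m = {w. length w = m}"

definition supp :: "('x,'k::zero) tv \<Rightarrow> 'x list set" where
  "supp f = {w. f w \<noteq> 0}"

definition TV :: "('x,'k::zero) tv set" where
  "TV = {f. finite (supp f)}"

definition hom :: "nat \<Rightarrow> ('x,'k::zero) tv set" where
  "hom m = {f. finite (supp f) \<and> (\<forall>w. f w \<noteq> 0 \<longrightarrow> length w = m)}"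

definition wd :: "'x list \<Rightarrow> ('x,'k::{zero,one}) tv" where
  "wd w = (\<lambda>u. if u = w then 1 else 0)"

definition cat :: "('x,'k::comm_semiring_1) tv \<Rightarrow> ('x,'k) tv \<Rightarrow> ('x,'k) tv" where
  "cat f g = (\<lambda>w. \<Sum>i\<le>length w. f (take i w) * g (drop i w))"

definition lin_ext :: "('x list \<Rightarrow> ('x,'k::comm_semiring_1) tv) \<Rightarrow> ('x,'k) tv \<Rightarrow> ('x,'k) tv" where
  "lin_ext G f = (\<lambda>u. \<Sum>w\<in>supp f. f w * G w u)"

definition idtens :: "nat \<Rightarrow> (('x,'k::comm_semiring_1) tv \<Rightarrow> ('x,'k) tv) \<Rightarrow> ('x,'k) tv \<Rightarrow> ('x,'k) tv" where
  "idtens a T = lin_ext (\<lambda>w. cat (wd (take a w)) (T (wd (drop a w))))"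

definition tensid :: "(('x,'k::comm_semiring_1) tv \<Rightarrow> ('x,'k) tv) \<Rightarrow> nat \<Rightarrow> ('x,'k) tv \<Rightarrow> ('x,'k) tv" where
  "tensid T b = lin_ext (\<lambda>w. cat (T (wd (take (length w - b) w))) (wd (drop (length w - b) w)))"

inductive_set lspan :: "('x,'k::field) tv set \<Rightarrow> ('x,'k) tv set" for S where
  lspan_zero: "(\<lambda>_. 0) \<in> lspan S"
| lspan_step: "f \<in> lspan S \<Longrightarrow> g \<in> S \<Longrightarrow> (\<lambda>x. c * g x + f x) \<in> lspan S"

(* tensor product of subspaces of T(V), realised in T(V) by concatenation *)
definition tensp :: "('x,'k::field) tv set \<Rightarrow> ('x,'k) tv set \<Rightarrow> ('x,'k) tv set" where
  "tensp P Q = lspan {cat p q | p q. p \<in> P \<and> q \<in> Q}"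

definition lm :: "('x::linorder,'k::zero) tv \<Rightarrow> 'x list" where
  "lm f = Max (supp f)"

definition nf_word :: "('x::linorder,'k::zero) tv set \<Rightarrow> 'x list \<Rightarrow> bool" where
  "nf_word R w \<longleftrightarrow> \<not> (\<exists>u v g. g \<in> R \<and> w = u @ lm g @ v)"

definition nf :: "('x::linorder,'k::zero) tv set \<Rightarrow> ('x,'k) tv \<Rightarrow> bool" where
  "nf R h \<longleftrightarrow> (\<forall>w. h w \<noteq> 0 \<longrightarrow> nf_word R w)"

definition presentation :: "nat \<Rightarrow> ('x::linorder,'k::field) tv set \<Rightarrow> bool" where
  "presentation N R \<longleftrightarrow> R \<subseteq> hom N \<and> (\<lambda>_. 0) \<notin> R
     \<and> (\<forall>f\<in>R. f (lm f) = 1)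
     \<and> (\<forall>f\<in>R. \<forall>g\<in>R. lm f = lm g \<longrightarrow> f = g)
     \<and> (\<forall>f\<in>R. \<forall>w. f w \<noteq> 0 \<and> w \<noteq> lm f \<longrightarrow> nf_word R w)"

definition Sop :: "('x::linorder,'k::field) tv set \<Rightarrow> ('x,'k) tv \<Rightarrow> ('x,'k) tv" where
  "Sop R = lin_ext (\<lambda>w. if w \<in> lm ` R
       then (\<lambda>u. wd w u - (THE g. g \<in> R \<and> lm g = w) u) else wd w)"

(* \<langle>t,s\<rangle>^k = ... s t s  (k factors, rightmost s) *)
fun alt :: "('a \<Rightarrow> 'a) \<Rightarrow> ('a \<Rightarrow> 'a) \<Rightarrow> nat \<Rightarrow> 'a \<Rightarrow> 'a" where
  "alt t s 0 = id"
| "alt t s (Suc k) = (if even k then s else t) \<circ> alt t s k"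

definition side_confluent :: "nat \<Rightarrow> ('x::linorder,'k::field) tv set \<Rightarrow> bool" where
  "side_confluent N R \<longleftrightarrow> (\<forall>m. 1 \<le> m \<and> m \<le> N - 1 \<longrightarrow>
     (\<exists>k\<ge>1. \<forall>f\<in>hom (N + m).
        alt (idtens m (Sop R)) (tensid (Sop R) m) k f
      = alt (tensid (Sop R) m) (idtens m (Sop R)) k f))"

(* one reduction: replace w1 lm(g) w2 by w1 (lm(g) - g) w2 *)
definition red :: "('x::linorder,'k::field) tv set \<Rightarrow> ('x,'k) tv \<Rightarrow> ('x,'k) tv \<Rightarrow> bool" where
  "red R f f' \<longleftrightarrow> (\<exists>u v g. g \<in> R \<and>
      f' = (\<lambda>x. f x - f (u @ lm g @ v) * cat (cat (wd u) g) (wd v) x))"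

definition phi :: "('x::linorder,'k::field) tv set \<Rightarrow> ('x,'k) tv \<Rightarrow> ('x,'k) tv" where
  "phi R f = (THE h. (red R)\<^sup>*\<^sup>* f h \<and> nf R h)"

definition reduction_operator :: "nat \<Rightarrow> (('x::linorder,'k::field) tv \<Rightarrow> ('x,'k) tv) \<Rightarrow> bool" where
  "reduction_operator m T \<longleftrightarrow>
     (\<forall>f\<in>hom m. T f \<in> hom m)
   \<and> (\<forall>f\<in>hom m. \<forall>g\<in>hom m. T (\<lambda>x. f x + g x) = (\<lambda>x. T f x + T g x))
   \<and> (\<forall>f\<in>hom m. \<forall>c. T (\<lambda>x. c * f x) = (\<lambda>x. c * T f x))
   \<and> (\<forall>f\<in>hom m. T (T f) = T f)
   \<and> (\<forall>y\<in>words m. T (wd y) = wd y \<or> (\<forall>x. T (wd y) x \<noteq> 0 \<longrightarrow> x < y))"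

definition Rbar :: "('x,'k::field) tv set \<Rightarrow> ('x,'k) tv set" where
  "Rbar R = lspan R"

definition Icomp :: "nat \<Rightarrow> ('x,'k::field) tv set \<Rightarrow> nat \<Rightarrow> ('x,'k) tv set" where
  "Icomp N R m = (if m < N then {\<lambda>_. 0}
     else lspan (\<Union>i\<in>{0..m-N}. tensp (tensp (hom i) (Rbar R)) (hom (m - N - i))))"

definition hpart :: "nat \<Rightarrow> ('x,'k::zero) tv \<Rightarrow> ('x,'k) tv" where
  "hpart m f = (\<lambda>w. if length w = m then f w else 0)"

definition Ideal :: "nat \<Rightarrow> ('x,'k::field) tv set \<Rightarrow> ('x,'k) tv set" where
  "Ideal N R = {f \<in> TV. \<forall>m. hpart m f \<in> Icomp N R m}"

(* A = T(V)/I(R): elements are cosets *)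
definition cls :: "nat \<Rightarrow> ('x,'k::field) tv set \<Rightarrow> ('x,'k) tv \<Rightarrow> ('x,'k) tv set" where
  "cls N R f = {g \<in> TV. (\<lambda>x. g x - f x) \<in> Ideal N R}"

definition Aset :: "nat \<Rightarrow> ('x,'k::field) tv set \<Rightarrow> ('x,'k) tv set set" where
  "Aset N R = cls N R ` TV"

definition rep :: "('x,'k) tv set \<Rightarrow> ('x,'k) tv" where
  "rep C = (SOME f. f \<in> C)"

definition Azero :: "nat \<Rightarrow> ('x,'k::field) tv set \<Rightarrow> ('x,'k) tv set" where
  "Azero N R = cls N R (\<lambda>_. 0)"

definition phibar :: "('x::linorder,'k::field) tv set \<Rightarrow> ('x,'k) tv set \<Rightarrow> ('x,'k) tv" where
  "phibar R C = phi R (rep C)"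

definition lN :: "nat \<Rightarrow> nat \<Rightarrow> nat" where
  "lN N n = (n div 2) * N + n mod 2"

definition J :: "nat \<Rightarrow> ('x,'k::field) tv set \<Rightarrow> nat \<Rightarrow> ('x,'k) tv set" where
  "J N R n = (if n = 0 then hom 0 else if n = 1 then hom 1 else if n = 2 then Rbar R
     else (\<Inter>i\<in>{0..lN N n - N}. tensp (tensp (hom i) (Rbar R)) (hom (lN N n - N - i))))"

(* A \<otimes> V^{\<otimes>l}, realised as coefficient functions X^{(l)} \<rightarrow> A *)
definition ATV :: "nat \<Rightarrow> ('x,'k::field) tv set \<Rightarrow> nat \<Rightarrow> ('x list \<Rightarrow> ('x,'k) tv set) set" where
  "ATV N R l = {F. (\<forall>v. F v \<in> Aset N R) \<and> (\<forall>v. length v \<noteq> l \<longrightarrow> F v = Azero N R)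
                 \<and> finite {v. F v \<noteq> Azero N R}}"

definition etens :: "nat \<Rightarrow> ('x,'k::field) tv set \<Rightarrow> ('x,'k) tv set \<Rightarrow> ('x,'k) tv \<Rightarrow> 'x list \<Rightarrow> ('x,'k) tv set" where
  "etens N R a j = (\<lambda>v. cls N R (\<lambda>x. j v * rep a x))"

inductive_set atspan :: "nat \<Rightarrow> ('x,'k::field) tv set \<Rightarrow> ('x list \<Rightarrow> ('x,'k) tv set) set
                         \<Rightarrow> ('x list \<Rightarrow> ('x,'k) tv set) set" for N R S where
  atspan_zero: "(\<lambda>_. Azero N R) \<in> atspan N R S"
| atspan_step: "F \<in> atspan N R S \<Longrightarrow> G \<in> S \<Longrightarrow>
     (\<lambda>v. cls N R (\<lambda>x. c * rep (G v) x + rep (F v) x)) \<in> atspan N R S"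

definition AJ :: "nat \<Rightarrow> ('x,'k::field) tv set \<Rightarrow> nat \<Rightarrow> ('x list \<Rightarrow> ('x,'k) tv set) set" where
  "AJ N R n = atspan N R {etens N R a j | a j. a \<in> Aset N R \<and> j \<in> J N R n}"

(* \<partial>_n : 1 \<otimes> w1 w2 \<mapsto> \<overline>w1 \<otimes> w2, extended left A-linearly *)
definition dK :: "nat \<Rightarrow> ('x,'k::field) tv set \<Rightarrow> nat \<Rightarrow> ('x list \<Rightarrow> ('x,'k) tv set) \<Rightarrow> 'x list \<Rightarrow> ('x,'k) tv set" where
  "dK N R n F = (\<lambda>w2. if length w2 = lN N (n - 1)
     then cls N R (\<lambda>x. \<Sum>w1\<in>words (lN N n - lN N (n - 1)). cat (rep (F (w1 @ w2))) (wd w1) x)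
     else Azero N R)"

(* \<phi>_n = \<overline>\<phi> \<otimes> id, landing in im(\<phi>) \<otimes> V^{\<otimes>l} \<subseteq> T(V) by concatenation *)
definition phin :: "('x::linorder,'k::field) tv set \<Rightarrow> nat \<Rightarrow> ('x list \<Rightarrow> ('x,'k) tv set) \<Rightarrow> ('x,'k) tv" where
  "phin R l F = (\<lambda>x. \<Sum>v\<in>words l. cat (phibar R (F v)) (wd v) x)"

definition dprime :: "nat \<Rightarrow> ('x::linorder,'k::field) tv set \<Rightarrow> nat \<Rightarrow> ('x,'k) tv \<Rightarrow> ('x,'k) tv" where
  "dprime N R n f = phin R (lN N (n - 1))
      (dK N R n (inv_into (AJ N R n) (phin R (lN N n)) f))"

end

theory Submission
  imports Defs "HOL-Library.Multiset"
begin

text \<open>The normal form of a word is defined by well-founded recursion on the lexicographic order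
  of words of equal length, always reducing at one chosen occurrence of a leading monomial.
  By well-founded induction the result does not depend on that choice: two occurrences either
  coincide, are disjoint (and the two reductions commute), or overlap inside a word of length
  \<open>N + m\<close> with \<open>m < N\<close>, where side-confluence of \<open>id \<otimes> S\<close> and \<open>S \<otimes> id\<close> closes the diamond.
  Hence the linear extension \<open>NF\<close> kills \<open>I(R)\<close> and is invariant under reductions; since
  reduction terminates (multiset order), \<open>\<phi> = NF\<close>, which gives (1), the kernel being
  generated by the elements \<open>w - NF w \<in> I(R)\<^sub>m\<close>. For (2), cosets modulo \<open>I(R)\<close> are classified
  by their normal forms, so both \<open>\<phi>\<^sub>n\<^sub>-\<^sub>1 \<circ> \<partial>\<^sub>n\<close> and \<open>(\<phi> \<otimes> id) \<circ> \<phi>\<^sub>n\<close> can be evaluated word by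
  word.\<close>

section \<open>Linear algebra of coefficient functions\<close>

definition lmul :: "'x list \<Rightarrow> ('x,'k::comm_semiring_1) tv \<Rightarrow> ('x,'k) tv" where
  "lmul a f = (\<lambda>x. if take (length a) x = a then f (drop (length a) x) else 0)"

definition rmul :: "('x,'k::comm_semiring_1) tv \<Rightarrow> 'x list \<Rightarrow> ('x,'k) tv" where
  "rmul f b = (\<lambda>x. if length b \<le> length x \<and> drop (length x - length b) x = b
     then f (take (length x - length b) x) else 0)"

definition lincomb :: "'a set \<Rightarrow> ('a \<Rightarrow> 'k::comm_semiring_1) \<Rightarrow> ('a \<Rightarrow> ('x,'k) tv) \<Rightarrow> ('x,'k) tv" where
  "lincomb S c F = (\<lambda>u. \<Sum>x\<in>S. c x * F x u)"

abbreviation sandwich :: "'x list \<Rightarrow> ('x,'k::comm_semiring_1) tv \<Rightarrow> 'x list \<Rightarrow> ('x,'k) tv" where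
  "sandwich u g v \<equiv> rmul (lmul u g) v"

lemma cat_wd_left: "cat (wd a) f = lmul a f"
proof (rule ext)
  fix x :: "'a list"
  have "cat (wd a) f x = (\<Sum>i\<le>length x. if i = length a then lmul a f x else 0)"
    unfolding cat_def wd_def lmul_def
  proof (intro sum.cong refl)
    fix i assume "i \<in> {..length x}"
    then show "(if take i x = a then 1 else 0) * f (drop i x)
        = (if i = length a then if take (length a) x = a then f (drop (length a) x) else 0 else 0)"
      by (cases "take i x = a") auto
  qed
  then show "cat (wd a) f x = lmul a f x"
    by (auto simp: lmul_def)
qed

lemma cat_wd_right: "cat f (wd b) = rmul f b"
proof (rule ext)
  fix x :: "'a list"
  have "cat f (wd b) x = (\<Sum>i\<le>length x. if i = length x - length b then rmul f b x else 0)"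
    unfolding cat_def wd_def rmul_def by (rule sum.cong) auto
  then show "cat f (wd b) x = rmul f b x"
    by (simp add: rmul_def)
qed

lemma cat_sandwich: "cat (cat (wd u) g) (wd v) = sandwich u g v"
  by (simp add: cat_wd_left cat_wd_right)

lemma TV_finite: "f \<in> TV \<Longrightarrow> finite (supp f)"
  by (simp add: TV_def)

lemma TV_zero: "(\<lambda>_. 0) \<in> TV"
  by (simp add: TV_def supp_def)

lemma TV_lin:
  "f \<in> TV \<Longrightarrow> g \<in> TV \<Longrightarrow> (\<lambda>x. a * f x + b * g x :: 'k::comm_semiring_1) \<in> TV"
proof -
  assume "f \<in> TV" "g \<in> TV"
  moreover have "supp (\<lambda>x. a * f x + b * g x) \<subseteq> supp f \<union> supp g"
    by (auto simp: supp_def)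
  ultimately show ?thesis
    unfolding TV_def by (auto intro: finite_subset)
qed

lemma TV_smult: "f \<in> TV \<Longrightarrow> (\<lambda>x. a * f x :: 'k::comm_semiring_1) \<in> TV"
  using TV_lin[of f f a 0] by simp

lemma TV_add: "f \<in> TV \<Longrightarrow> g \<in> TV \<Longrightarrow> (\<lambda>x. f x + g x :: 'k::comm_semiring_1) \<in> TV"
  using TV_lin[of f g 1 1] by simp

lemma TV_diff: "f \<in> TV \<Longrightarrow> g \<in> TV \<Longrightarrow> (\<lambda>x. f x - g x :: 'k::comm_ring_1) \<in> TV"
  using TV_lin[of f g 1 "-1"] by simp

lemma hom_subset_TV: "hom m \<subseteq> TV"
  by (auto simp: hom_def TV_def)

lemma supp_wd: "supp (wd w :: ('x,'k::zero_neq_one) tv) = {w}"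
  by (auto simp: supp_def wd_def)

lemma wd_TV [simp]: "(wd w :: ('x,'k::zero_neq_one) tv) \<in> TV"
  by (simp add: TV_def supp_wd)

lemma wd_hom: "(wd u :: ('x,'k::zero_neq_one) tv) \<in> hom (length u)"
  using wd_TV[of u] unfolding hom_def TV_def by (auto simp: wd_def)

lemma supp_lincomb: "supp (lincomb S c F) \<subseteq> (\<Union>x\<in>S. supp (F x))"
  unfolding supp_def lincomb_def by (auto intro!: sum.neutral)

lemma lincomb_TV: "finite S \<Longrightarrow> (\<And>x. x \<in> S \<Longrightarrow> F x \<in> TV) \<Longrightarrow> lincomb S c F \<in> TV"
  unfolding TV_def using supp_lincomb[of S c F] by (auto intro: finite_subset)

lemma lincomb_wd_expand:
  "finite S \<Longrightarrow> supp f \<subseteq> S \<Longrightarrow> f = lincomb S f (wd :: _ \<Rightarrow> ('x,'k::comm_semiring_1) tv)"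
proof (rule ext)
  fix u assume S: "finite S" "supp f \<subseteq> S"
  show "f u = lincomb S f wd u"
  proof (cases "u \<in> S")
    case True
    then show ?thesis
      using S by (simp add: lincomb_def wd_def if_distrib[where f="\<lambda>z. _ * z"] cong: if_cong)
  next
    case False
    then have "f u = 0" using S by (auto simp: supp_def)
    moreover have "lincomb S f wd u = 0"
      unfolding lincomb_def wd_def using False by (auto intro!: sum.neutral)
    ultimately show ?thesis by simp
  qed
qed

lemma TV_expand: "f \<in> TV \<Longrightarrow> f = lincomb (supp f) f (wd :: _ \<Rightarrow> ('x,'k::comm_semiring_1) tv)"
  by (rule lincomb_wd_expand) (auto simp: TV_def)

lemma lincomb_diff:
  "lincomb S (c :: _ \<Rightarrow> 'k::comm_ring_1) (\<lambda>y x. F y x - G y x) = (\<lambda>x. lincomb S c F x - lincomb S c G x)"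
  unfolding lincomb_def by (rule ext) (simp add: right_diff_distrib sum_subtractf)

lemma lincomb_swap:
  "lincomb B d (\<lambda>b. lincomb A c (\<lambda>a. F a b)) = lincomb A c (\<lambda>a. lincomb B d (F a))"
  unfolding lincomb_def by (rule ext) (simp add: sum_distrib_left sum.swap[of _ A] algebra_simps)

lemma lin_ext_eq_lincomb: "finite S \<Longrightarrow> supp f \<subseteq> S \<Longrightarrow> lin_ext G f = lincomb S f G"
  unfolding lin_ext_def lincomb_def
  by (rule ext, rule sum.mono_neutral_left) (auto simp: supp_def)

lemma lin_ext_lincomb:
  assumes S: "finite S" and F: "\<And>x. x \<in> S \<Longrightarrow> F x \<in> TV"
  shows "lin_ext G (lincomb S c F) = lincomb S c (\<lambda>x. lin_ext G (F x))"
proof -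
  let ?T = "\<Union>x\<in>S. supp (F x)"
  have T: "finite ?T" using S F by (auto simp: TV_def)
  have "lin_ext G (lincomb S c F) = lincomb ?T (lincomb S c F) G"
    by (rule lin_ext_eq_lincomb[OF T supp_lincomb])
  also have "\<dots> = lincomb S c (\<lambda>x. lincomb ?T (F x) G)"
    unfolding lincomb_def
    by (rule ext) (simp add: sum_distrib_right sum_distrib_left mult.assoc sum.swap[of _ ?T])
  also have "\<dots> = lincomb S c (\<lambda>x. lin_ext G (F x))"
  proof -
    have "\<And>x. x \<in> S \<Longrightarrow> lincomb ?T (F x) G = lin_ext G (F x)"
      by (rule lin_ext_eq_lincomb[OF T, symmetric]) auto
    then show ?thesis
      unfolding lincomb_def by (intro ext sum.cong) (auto simp: fun_eq_iff lincomb_def)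
  qed
  finally show ?thesis .
qed

lemma lin_ext_wd: "lin_ext G (wd w :: ('x,'k::comm_semiring_1) tv) = G w"
  by (subst lin_ext_eq_lincomb[of "{w}"]) (auto simp: supp_def wd_def lincomb_def)

lemma lin_ext_lin:
  assumes "f \<in> TV" "g \<in> TV"
  shows "lin_ext G (\<lambda>u. a * f u + b * g u) = (\<lambda>u. a * lin_ext G f u + b * lin_ext G g u)"
proof -
  let ?S = "supp f \<union> supp g"
  have S: "finite ?S" using assms by (auto simp: TV_def)
  have s: "supp (\<lambda>u. a * f u + b * g u) \<subseteq> ?S" by (auto simp: supp_def)
  show ?thesis
    by (subst lin_ext_eq_lincomb[OF S s], subst lin_ext_eq_lincomb[OF S, of f], simp,
        subst lin_ext_eq_lincomb[OF S, of g], simp)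
      (auto simp: lincomb_def sum_distrib_left sum.distrib algebra_simps)
qed

lemma lin_ext_diff:
  "f \<in> TV \<Longrightarrow> g \<in> TV \<Longrightarrow> lin_ext G (\<lambda>u. f u - g u :: 'k::comm_ring_1) = (\<lambda>u. lin_ext G f u - lin_ext G g u)"
  using lin_ext_lin[of f g G 1 "-1"] by simp

lemma lin_ext_zero: "lin_ext G (\<lambda>_. 0) = (\<lambda>_. 0)"
  by (simp add: lin_ext_def)

lemma lin_ext_cong: "(\<And>z. z \<in> supp h \<Longrightarrow> F z = G z) \<Longrightarrow> lin_ext F h = lin_ext G h"
  unfolding lin_ext_def by (rule ext, rule sum.cong) auto

lemma supp_lin_ext: "supp (lin_ext G h) \<subseteq> (\<Union>x\<in>supp h. supp (G x))"
  unfolding supp_def lin_ext_def by (auto intro!: sum.neutral)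

lemma lin_ext_TV: "h \<in> TV \<Longrightarrow> (\<And>x. x \<in> supp h \<Longrightarrow> G x \<in> TV) \<Longrightarrow> lin_ext G h \<in> TV"
  using supp_lin_ext[of G h] unfolding TV_def by (auto intro: finite_subset)

lemma lmul_lincomb: "lmul a (lincomb S c F) = lincomb S c (\<lambda>x. lmul a (F x))"
  by (rule ext) (auto simp: lmul_def lincomb_def)

lemma rmul_lincomb: "rmul (lincomb S c F) b = lincomb S c (\<lambda>x. rmul (F x) b)"
  by (rule ext) (auto simp: rmul_def lincomb_def)

lemma lmul_wd: "lmul a (wd w) = wd (a @ w)"
  by (rule ext) (auto simp: lmul_def wd_def, metis append_take_drop_id)

lemma rmul_wd: "rmul (wd w) b = wd (w @ b)"
  by (rule ext) (auto simp: rmul_def wd_def, metis append_take_drop_id)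

lemma rmul_Nil [simp]: "rmul f [] = f"
  by (rule ext) (simp add: rmul_def)

lemma lmul_Nil [simp]: "lmul [] f = f"
  by (rule ext) (simp add: lmul_def)

lemma lmul_diff: "lmul a (\<lambda>u. f u - g u :: 'k::comm_ring_1) = (\<lambda>u. lmul a f u - lmul a g u)"
  by (rule ext) (simp add: lmul_def)

lemma rmul_diff: "rmul (\<lambda>u. f u - g u :: 'k::comm_ring_1) b = (\<lambda>u. rmul f b u - rmul g b u)"
  by (rule ext) (simp add: rmul_def)

lemma lmul_lmul: "f \<in> TV \<Longrightarrow> lmul a (lmul t f) = lmul (a @ t) f"
  by (subst (1 2) TV_expand[of f]) (simp_all add: lmul_lincomb lmul_wd)

lemma rmul_rmul: "f \<in> TV \<Longrightarrow> rmul (rmul f v) b = rmul f (v @ b)"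
  by (subst (1 2) TV_expand[of f]) (simp_all add: rmul_lincomb rmul_wd)

lemma lmul_rmul: "f \<in> TV \<Longrightarrow> lmul a (rmul f b) = rmul (lmul a f) b"
  by (subst (1 2) TV_expand[of f]) (simp_all add: rmul_lincomb rmul_wd lmul_lincomb lmul_wd)

lemma lmul_TV: "f \<in> TV \<Longrightarrow> lmul a f \<in> TV"
  by (subst TV_expand[of f]) (auto simp: lmul_lincomb lmul_wd intro!: lincomb_TV TV_finite)

lemma rmul_TV: "f \<in> TV \<Longrightarrow> rmul f b \<in> TV"
  by (subst TV_expand[of f]) (auto simp: rmul_lincomb rmul_wd intro!: lincomb_TV TV_finite)

lemma sandwich_at [simp]: "sandwich u g v (u @ y @ v) = g y"
  by (simp add: lmul_def rmul_def)

lemma sandwich_nonzero: "sandwich u g v x \<noteq> 0 \<Longrightarrow> \<exists>y. x = u @ y @ v \<and> g y \<noteq> 0"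
proof -
  assume a: "sandwich u g v x \<noteq> 0"
  let ?z = "take (length x - length v) x"
  let ?y = "drop (length u) ?z"
  have v: "length v \<le> length x" "drop (length x - length v) x = v"
    using a by (auto simp: rmul_def split: if_splits)
  have u: "take (length u) ?z = u" "g ?y \<noteq> 0"
    using a v by (auto simp: lmul_def rmul_def split: if_splits)
  have "x = u @ ?y @ v"
    using v(2) u(1) by (metis append.assoc append_take_drop_id)
  then show ?thesis using u by blast
qed

lemma sandwich_eq_lincomb: "g \<in> TV \<Longrightarrow> sandwich u g v = lincomb (supp g) g (\<lambda>y. wd (u @ y @ v))"
  by (subst TV_expand[of g]) (simp_all add: lmul_lincomb rmul_lincomb lmul_wd rmul_wd)

lemma lin_ext_sandwich:
  "g \<in> TV \<Longrightarrow> lin_ext G (sandwich u g v) = lincomb (supp g) g (\<lambda>y. G (u @ y @ v))"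
  by (simp add: sandwich_eq_lincomb TV_finite lin_ext_lincomb lin_ext_wd)

lemma sandwich_TV: "g \<in> TV \<Longrightarrow> sandwich u g v \<in> TV"
  by (simp add: lmul_TV rmul_TV)

lemma sandwich_lin: "sandwich u (\<lambda>x. c * g x + f x) v = (\<lambda>x. c * sandwich u g v x + sandwich u f v x)"
  by (rule ext) (simp add: lmul_def rmul_def)

lemma sandwich_zero: "sandwich u (\<lambda>_. 0) v = (\<lambda>_. 0)"
  by (rule ext) (simp add: lmul_def rmul_def)

lemma cat_lincomb_left: "cat (lincomb A c F) q = lincomb A c (\<lambda>a. cat (F a) q)"
  unfolding cat_def lincomb_def
  by (rule ext) (simp add: sum_distrib_right sum_distrib_left sum.swap[of _ A] mult.assoc)

lemma cat_lincomb_right: "cat p (lincomb A c F) = lincomb A c (\<lambda>a. cat p (F a))"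
  unfolding cat_def lincomb_def
  by (rule ext) (simp add: sum_distrib_right sum_distrib_left sum.swap[of _ A] algebra_simps)

lemma cat_lin_left: "cat (\<lambda>x. c * g x + f x) q = (\<lambda>x. c * cat g q x + cat f q x)"
  unfolding cat_def by (rule ext) (simp add: algebra_simps sum.distrib sum_distrib_left)

lemma cat_zero_left: "cat (\<lambda>_. 0) q = (\<lambda>_. 0)"
  unfolding cat_def by simp

lemma lspan_smult: "h \<in> lspan S \<Longrightarrow> (\<lambda>x. b * h x) \<in> lspan S"
proof (induction rule: lspan.induct)
  case lspan_zero
  then show ?case using lspan.lspan_zero by simp
next
  case (lspan_step f g c)
  have "(\<lambda>x. (b * c) * g x + b * f x) \<in> lspan S"
    by (rule lspan.lspan_step[OF lspan_step.IH lspan_step.hyps(2)])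
  then show ?case by (simp add: algebra_simps)
qed

lemma lspan_add: "f \<in> lspan S \<Longrightarrow> h \<in> lspan S \<Longrightarrow> (\<lambda>x. f x + h x) \<in> lspan S"
proof (induction rule: lspan.induct)
  case (lspan_step f g c)
  then show ?case using lspan.lspan_step[of "\<lambda>x. f x + h x" S g c] by (simp add: algebra_simps)
qed simp

lemma lspan_lin: "f \<in> lspan S \<Longrightarrow> g \<in> lspan S \<Longrightarrow> (\<lambda>x. c * g x + f x) \<in> lspan S"
  using lspan_add[OF lspan_smult] by blast

lemma lspan_gen: "g \<in> S \<Longrightarrow> g \<in> lspan S"
  using lspan.lspan_step[OF lspan.lspan_zero, of g S 1] by simp

lemma lspan_lincomb: "finite A \<Longrightarrow> (\<And>a. a \<in> A \<Longrightarrow> F a \<in> lspan S) \<Longrightarrow> lincomb A c F \<in> lspan S"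
proof (induction A rule: finite_induct)
  case empty
  then show ?case using lspan.lspan_zero by (simp add: lincomb_def)
next
  case (insert a A)
  have "lincomb (insert a A) c F = (\<lambda>x. c a * F a x + lincomb A c F x)"
    using insert(1,2) by (simp add: lincomb_def)
  then show ?case using lspan_lin[OF insert(3) insert(4)] insert(4) by simp
qed

lemma lspan_hom: "f \<in> lspan S \<Longrightarrow> S \<subseteq> hom m \<Longrightarrow> f \<in> hom m"
proof (induction rule: lspan.induct)
  case lspan_zero
  then show ?case by (simp add: hom_def supp_def)
next
  case (lspan_step f g c)
  then have "f \<in> hom m" "g \<in> hom m" by blast+
  moreover have "supp (\<lambda>x. c * g x + f x) \<subseteq> supp g \<union> supp f"
    by (auto simp: supp_def)
  moreover have "length x = m" if "c * g x + f x \<noteq> 0" for x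
    using that \<open>f \<in> hom m\<close> \<open>g \<in> hom m\<close> by (cases "g x = 0") (auto simp: hom_def)
  ultimately show ?case
    unfolding hom_def by (auto intro: finite_subset)
qed


section \<open>Equal-length lexicographic order and factorisations of words\<close>

definition word_less :: "('x::linorder list \<times> 'x list) set" where
  "word_less = {(x, y). length x = length y \<and> x < y}"

lemma less_append_same_length:
  "length x = length y \<Longrightarrow> (x::'a::linorder list) < y \<Longrightarrow> x @ a < y @ b"
proof (induction x arbitrary: y)
  case (Cons c x)
  then show ?case by (cases y) auto
qed simp

lemma less_prepend_iff: "((u::'a::linorder list) @ x < u @ y) = (x < y)"
  by (induction u) auto

lemma word_less_context:
  "(x, y) \<in> word_less \<Longrightarrow> (u @ x @ v, u @ y @ v) \<in> word_less"
  by (auto simp: word_less_def less_prepend_iff less_append_same_length)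

lemma trans_word_less: "(x, y) \<in> word_less \<Longrightarrow> (y, z) \<in> word_less \<Longrightarrow> (x, z) \<in> word_less"
  by (auto simp: word_less_def)

lemma finite_words: "finite (words n :: 'x::finite list set)"
  using finite_lists_length_eq[of "UNIV::'x set" n] by (simp add: words_def)

text \<open>On a finite alphabet there are only finitely many words of each length, so the
  lexicographic order restricted to equal lengths is well-founded.\<close>

lemma wf_word_less: "wf (word_less :: ('x::{finite,linorder} list \<times> _) set)"
proof -
  define rk where "rk = (\<lambda>x::'x list. card {y. length y = length x \<and> y < x})"
  have "word_less \<subseteq> measure rk"
  proof
    fix p assume "p \<in> (word_less :: ('x list \<times> _) set)"
    then obtain x y where p: "p = (x, y)" "length x = length y" "x < y"
      by (auto simp: word_less_def)
    have "{z. length z = length x \<and> z < x} \<subset> {z. length z = length y \<and> z < y}"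
      using p by auto
    moreover have "finite {z. length z = length y \<and> z < y}"
      by (rule finite_subset[OF _ finite_words[of "length y"]]) (auto simp: words_def)
    ultimately show "p \<in> measure rk"
      using p by (auto simp: rk_def intro: psubset_card_mono)
  qed
  then show ?thesis by (rule wf_subset[OF wf_measure])
qed

lemma sum_words_append:
  "(\<Sum>v\<in>(words (k + l) :: 'x::finite list set). T v) = (\<Sum>w2\<in>words l. \<Sum>w1\<in>words k. T (w1 @ w2))"
proof -
  have bij: "bij_betw (\<lambda>(w1, w2). w1 @ w2) (words k \<times> words l) (words (k + l) :: 'x list set)"
  proof (rule bij_betw_imageI)
    show "inj_on (\<lambda>(w1, w2). w1 @ w2) (words k \<times> (words l :: 'x list set))"
      by (rule inj_onI, clarify) (simp add: words_def)
    show "(\<lambda>(w1, w2). w1 @ w2) ` (words k \<times> words l) = (words (k + l) :: 'x list set)"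
    proof (intro equalityI subsetI)
      fix v assume "v \<in> (words (k + l) :: 'x list set)"
      then show "v \<in> (\<lambda>(w1, w2). w1 @ w2) ` (words k \<times> words l)"
        by (intro image_eqI[of _ _ "(take k v, drop k v)"]) (auto simp: words_def)
    qed (auto simp: words_def)
  qed
  have "(\<Sum>v\<in>words (k + l). T v) = (\<Sum>w1\<in>words k. \<Sum>w2\<in>words l. T (w1 @ w2))"
    using sum.reindex_bij_betw[OF bij, of T] by (simp add: case_prod_unfold sum.cartesian_product)
  then show ?thesis by (simp add: sum.swap[of _ "words k"])
qed

lemma factorisations_aligned:
  "u1 @ L1 @ v1 = u2 @ L2 @ v2 \<Longrightarrow> length L1 = length L2 \<Longrightarrow> length u1 = length u2
   \<Longrightarrow> u1 = u2 \<and> L1 = L2 \<and> v1 = v2"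
  by (metis append_eq_append_conv)

lemma factorisations_disjoint:
  assumes e: "u1 @ L1 @ v1 = u2 @ L2 @ v2" and "length u1 + length L1 \<le> length u2"
  shows "\<exists>b. u2 = u1 @ L1 @ b \<and> v1 = b @ L2 @ v2"
proof -
  from e have "(u1 @ L1) @ v1 = u2 @ (L2 @ v2)" by simp
  then obtain us where
    "(u1 @ L1 = u2 @ us \<and> us @ v1 = L2 @ v2) \<or> ((u1 @ L1) @ us = u2 \<and> v1 = us @ L2 @ v2)"
    using append_eq_append_conv2[THEN iffD1] by blast
  then show ?thesis
  proof
    assume a: "u1 @ L1 = u2 @ us \<and> us @ v1 = L2 @ v2"
    then have "us = []"
      using assms(2) by (metis add_le_same_cancel1 le_zero_eq length_0_conv length_append)
    then show ?thesis using a by auto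
  qed auto
qed

lemma factorisations_overlapping:
  assumes e: "u1 @ L1 @ v1 = u2 @ L2 @ v2"
    and l: "length L1 = length L2" "length u1 < length u2" "length u2 < length u1 + length L1"
  shows "\<exists>t s. u2 = u1 @ t \<and> v1 = s @ v2 \<and> L1 @ s = t @ L2 \<and> length t = length u2 - length u1"
proof -
  obtain t where t: "u2 = u1 @ t"
    using e l(2) by (metis append_eq_append_conv_if append_take_drop_id less_imp_le take_all_iff)
  then have e2: "L1 @ v1 = t @ (L2 @ v2)" using e by simp
  have lt: "length t < length L1" using t l by simp
  from e2 obtain us where "(L1 = t @ us \<and> us @ v1 = L2 @ v2) \<or> (L1 @ us = t \<and> v1 = us @ L2 @ v2)"
    using append_eq_append_conv2[THEN iffD1] by blast
  with lt obtain us where u: "L1 = t @ us" "us @ v1 = L2 @ v2" by auto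
  have "t \<noteq> []" using t l(2) by auto
  then have "length us < length L2" using u(1) l(1) by (cases t) auto
  from u(2) obtain s where "(us = L2 @ s \<and> s @ v1 = v2) \<or> (us @ s = L2 \<and> v1 = s @ v2)"
    using append_eq_append_conv2[THEN iffD1] by blast
  with \<open>length us < length L2\<close> have "us @ s = L2 \<and> v1 = s @ v2" by auto
  then show ?thesis using t u by auto
qed

lemma lN_le_Suc: "1 \<le> n \<Longrightarrow> 1 \<le> N \<Longrightarrow> lN N (n - 1) \<le> lN N n"
proof (cases "even n")
  case True
  then obtain q where q: "n = 2 * q" ..
  moreover assume "1 \<le> n" "1 \<le> N"
  ultimately obtain p where "q = Suc p" by (cases q) auto
  with q have "n - 1 = 2 * p + 1" "n = 2 * Suc p" by simp_all
  then show ?thesis using \<open>1 \<le> N\<close> by (simp add: lN_def)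
next
  case False
  then obtain q where "n = 2 * q + 1" by (rule oddE)
  then show ?thesis by (simp add: lN_def)
qed

lemma lN_ge: "2 \<le> n \<Longrightarrow> N \<le> lN N n"
proof -
  assume "2 \<le> n"
  then have "1 \<le> n div 2" by simp
  then have "1 * N \<le> (n div 2) * N" by (rule mult_le_mono1)
  then show ?thesis unfolding lN_def by linarith
qed


section \<open>Normal forms of words\<close>

definition reduct :: "'x::linorder list \<Rightarrow> ('x,'k::comm_ring_1) tv \<Rightarrow> 'x list \<Rightarrow> ('x,'k) tv" where
  "reduct u g v = (\<lambda>x. wd (u @ lm g @ v) x - sandwich u g v x)"

lemma sandwich_reduct:
  "g \<in> TV \<Longrightarrow> sandwich a (reduct t g v) b = reduct (a @ t) g (v @ b)"
  by (simp add: reduct_def lmul_diff rmul_diff lmul_wd rmul_wd lmul_lmul lmul_rmul rmul_rmul lmul_TV)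

lemma reduct_TV: "g \<in> TV \<Longrightarrow> reduct u g v \<in> TV"
  by (simp add: reduct_def TV_diff sandwich_TV)

locale reduced_presentation =
  fixes N :: nat and R :: "('x::{finite,linorder},'k::field) tv set"
  assumes N_ge_2: "N \<ge> 2" and presentation: "presentation N R"
begin

lemma rel_hom: "g \<in> R \<Longrightarrow> g \<in> hom N"
  using presentation by (auto simp: presentation_def)

lemma rel_TV: "g \<in> R \<Longrightarrow> g \<in> TV"
  using rel_hom hom_subset_TV by blast

lemma rel_length: "g \<in> R \<Longrightarrow> g y \<noteq> 0 \<Longrightarrow> length y = N"
  using rel_hom by (auto simp: hom_def)

lemma lm_coeff: "g \<in> R \<Longrightarrow> g (lm g) = 1"
  using presentation by (auto simp: presentation_def)

lemma lm_inj: "g \<in> R \<Longrightarrow> h \<in> R \<Longrightarrow> lm g = lm h \<Longrightarrow> g = h"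
  using presentation by (auto simp: presentation_def)

lemma length_lm: "g \<in> R \<Longrightarrow> length (lm g) = N"
  using rel_length lm_coeff by fastforce

lemma lm_in_supp: "g \<in> R \<Longrightarrow> lm g \<in> supp g"
  using lm_coeff by (force simp: supp_def)

lemma word_less_lm:
  assumes "g \<in> R" "g y \<noteq> 0" "y \<noteq> lm g"
  shows "(u @ y @ v, u @ lm g @ v) \<in> word_less"
proof -
  have "y \<le> lm g"
    unfolding lm_def using assms rel_TV[of g] by (auto simp: TV_def supp_def)
  then have "(y, lm g) \<in> word_less"
    using assms rel_length length_lm by (auto simp: word_less_def)
  then show ?thesis by (rule word_less_context)
qed

text \<open>The leading coefficient 1 cancels the reduced word itself.\<close>

lemma supp_reduct:
  assumes "g \<in> R" "z \<in> supp (reduct u g v)"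
  shows "(z, u @ lm g @ v) \<in> word_less"
proof -
  have z: "z \<noteq> u @ lm g @ v" "sandwich u g v z \<noteq> 0"
    using assms by (auto simp: supp_def reduct_def wd_def lm_coeff split: if_splits)
  then obtain y where "z = u @ y @ v" "g y \<noteq> 0"
    using sandwich_nonzero by blast
  with z(1) show ?thesis
    using word_less_lm[OF assms(1)] by blast
qed

definition occurrence :: "'x list \<Rightarrow> 'x list \<times> ('x,'k) tv \<times> 'x list" where
  "occurrence w = (SOME (u, g, v). g \<in> R \<and> w = u @ lm g @ v)"

lemma obtain_occurrence:
  assumes "\<not> nf_word R w"
  obtains u g v where "occurrence w = (u, g, v)" "g \<in> R" "w = u @ lm g @ v"
proof -
  have "\<exists>d. case d of (u, g, v) \<Rightarrow> g \<in> R \<and> w = u @ lm g @ v"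
    using assms by (auto simp: nf_word_def)
  then have "case occurrence w of (u, g, v) \<Rightarrow> g \<in> R \<and> w = u @ lm g @ v"
    unfolding occurrence_def by (rule someI_ex)
  with that show thesis by (cases "occurrence w") simp
qed

definition nfw_step :: "('x list \<Rightarrow> ('x,'k) tv) \<Rightarrow> 'x list \<Rightarrow> ('x,'k) tv" where
  "nfw_step G w = (if nf_word R w then wd w
     else (case occurrence w of (u, g, v) \<Rightarrow> lin_ext G (reduct u g v)))"

definition nfw :: "'x list \<Rightarrow> ('x,'k) tv" where
  "nfw = wfrec word_less nfw_step"

definition NF :: "('x,'k) tv \<Rightarrow> ('x,'k) tv" where
  "NF = lin_ext nfw"

lemma adm_wf_nfw_step: "adm_wf word_less nfw_step"
  unfolding adm_wf_def
proof (intro allI impI)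
  fix F G :: "'x list \<Rightarrow> ('x,'k) tv" and w
  assume eq: "\<forall>z. (z, w) \<in> word_less \<longrightarrow> F z = G z"
  show "nfw_step F w = nfw_step G w"
  proof (cases "nf_word R w")
    case False
    then obtain u h v where o: "occurrence w = (u, h, v)" "h \<in> R" "w = u @ lm h @ v"
      by (rule obtain_occurrence)
    have "lin_ext F (reduct u h v) = lin_ext G (reduct u h v)"
      by (rule lin_ext_cong) (use eq supp_reduct[OF o(2)] o(3) in blast)
    then show ?thesis using False o(1) by (simp add: nfw_step_def)
  qed (simp add: nfw_step_def)
qed

lemma nfw_unfold: "nfw w = nfw_step nfw w"
  unfolding nfw_def by (subst wfrec_fixpoint[OF wf_word_less adm_wf_nfw_step]) simp

lemma nfw_nf_word: "nf_word R w \<Longrightarrow> nfw w = wd w"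
  by (subst nfw_unfold) (simp add: nfw_step_def)

lemma nfw_occurrence:
  "\<not> nf_word R w \<Longrightarrow> occurrence w = (u, g, v) \<Longrightarrow> nfw w = NF (reduct u g v)"
  by (subst nfw_unfold) (simp add: nfw_step_def NF_def)

lemma nfw_props:
  "nfw w \<in> TV \<and> supp (nfw w) \<subseteq> {z. z = w \<or> (z, w) \<in> word_less} \<and> nf R (nfw w)"
proof (induction w rule: wf_induct_rule[OF wf_word_less])
  case (1 w)
  show ?case
  proof (cases "nf_word R w")
    case True
    then have "nf R (wd w)" by (simp add: nf_def wd_def)
    then show ?thesis using True by (simp add: nfw_nf_word supp_wd)
  next
    case False
    then obtain u h v where o: "occurrence w = (u, h, v)" "h \<in> R" "w = u @ lm h @ v"
      by (rule obtain_occurrence)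
    have lower: "\<And>z. z \<in> supp (reduct u h v) \<Longrightarrow> (z, w) \<in> word_less"
      using supp_reduct[OF o(2)] o(3) by auto
    have e: "nfw w = lin_ext nfw (reduct u h v)"
      using nfw_occurrence[OF False o(1)] by (simp add: NF_def)
    have "nfw w \<in> TV"
      unfolding e using 1 lower reduct_TV[OF rel_TV[OF o(2)]] by (auto intro!: lin_ext_TV)
    moreover have "supp (nfw w) \<subseteq> {z. z = w \<or> (z, w) \<in> word_less}"
      unfolding e using supp_lin_ext[of nfw "reduct u h v"] 1 lower trans_word_less by blast
    moreover have "nf R (nfw w)"
      unfolding e nf_def using supp_lin_ext[of nfw "reduct u h v"] 1 lower
      by (force simp: nf_def supp_def)
    ultimately show ?thesis by blast
  qed
qed

lemma nfw_TV: "nfw w \<in> TV"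
  using nfw_props by blast

lemma NF_wd: "NF (wd x) = nfw x"
  unfolding NF_def by (rule lin_ext_wd)

lemma NF_zero: "NF (\<lambda>_. 0) = (\<lambda>_. 0)"
  unfolding NF_def by (rule lin_ext_zero)

lemma NF_lincomb:
  "finite S \<Longrightarrow> (\<And>x. x \<in> S \<Longrightarrow> F x \<in> TV) \<Longrightarrow> NF (lincomb S c F) = lincomb S c (\<lambda>x. NF (F x))"
  unfolding NF_def by (rule lin_ext_lincomb)

lemma NF_sandwich: "g \<in> TV \<Longrightarrow> NF (sandwich u g v) = lincomb (supp g) g (\<lambda>y. nfw (u @ y @ v))"
  unfolding NF_def by (rule lin_ext_sandwich)

lemma NF_lin:
  "f \<in> TV \<Longrightarrow> g \<in> TV \<Longrightarrow> NF (\<lambda>x. a * f x + b * g x) = (\<lambda>x. a * NF f x + b * NF g x)"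
  unfolding NF_def by (rule lin_ext_lin)

lemma NF_diff: "f \<in> TV \<Longrightarrow> g \<in> TV \<Longrightarrow> NF (\<lambda>u. f u - g u) = (\<lambda>u. NF f u - NF g u)"
  unfolding NF_def by (rule lin_ext_diff)

lemma NF_reduct: "g \<in> R \<Longrightarrow> NF (reduct u g v) = (\<lambda>x. nfw (u @ lm g @ v) x - NF (sandwich u g v) x)"
  using rel_TV by (simp add: reduct_def NF_diff sandwich_TV NF_wd)

lemma NF_props:
  assumes "f \<in> TV"
  shows "NF f \<in> TV \<and> nf R (NF f) \<and> (\<forall>z\<in>supp (NF f). \<exists>x\<in>supp f. z = x \<or> (z, x) \<in> word_less)"
proof -
  have s: "supp (NF f) \<subseteq> (\<Union>x\<in>supp f. supp (nfw x))"
    unfolding NF_def by (rule supp_lin_ext)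
  have "NF f \<in> TV"
    unfolding NF_def using assms nfw_props by (auto intro: lin_ext_TV)
  moreover have "nf R (NF f)"
    using s nfw_props by (force simp: nf_def supp_def)
  moreover have "\<forall>z\<in>supp (NF f). \<exists>x\<in>supp f. z = x \<or> (z, x) \<in> word_less"
    using s nfw_props by blast
  ultimately show ?thesis by blast
qed

lemma NF_TV: "f \<in> TV \<Longrightarrow> NF f \<in> TV"
  using NF_props by blast

lemma NF_nf: "h \<in> TV \<Longrightarrow> nf R h \<Longrightarrow> NF h = h"
proof -
  assume h: "h \<in> TV" "nf R h"
  have "NF h = lincomb (supp h) h nfw"
    unfolding NF_def by (rule lin_ext_eq_lincomb[OF TV_finite[OF h(1)]]) simp
  also have "\<dots> = lincomb (supp h) h wd"
    unfolding lincomb_def using h(2) by (intro ext sum.cong refl) (simp add: nfw_nf_word nf_def supp_def)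
  also have "\<dots> = h" using TV_expand[OF h(1)] by simp
  finally show ?thesis .
qed

lemma NF_hom: "f \<in> hom m \<Longrightarrow> NF f \<in> hom m"
proof -
  assume f: "f \<in> hom m"
  then have p: "NF f \<in> TV" "\<forall>z\<in>supp (NF f). \<exists>x\<in>supp f. z = x \<or> (z, x) \<in> word_less"
    using NF_props hom_subset_TV by blast+
  have "length z = m" if "NF f z \<noteq> 0" for z
    using that p(2) f by (force simp: supp_def hom_def word_less_def)
  then show ?thesis using p(1) by (auto simp: hom_def TV_def)
qed

end


section \<open>Independence of the normal form from the chosen occurrence\<close>

context reduced_presentation
begin

definition resolvable :: "'x list \<Rightarrow> bool" where
  "resolvable w \<longleftrightarrow> (\<forall>u g v. g \<in> R \<longrightarrow> w = u @ lm g @ v \<longrightarrow> NF (sandwich u g v) = (\<lambda>_. 0))"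

lemma resolvableD:
  assumes "resolvable (u @ lm g @ v)" "g \<in> R"
  shows "(\<Sum>y\<in>supp g. g y * nfw (u @ y @ v) p) = 0"
proof -
  have "NF (sandwich u g v) p = 0"
    using assms unfolding resolvable_def by auto
  then show ?thesis using NF_sandwich[OF rel_TV[OF assms(2)]] by (simp add: lincomb_def)
qed

text \<open>Two disjoint occurrences: expanding both relations gives a double sum whose
  non-leading terms vanish by the induction hypothesis, in either order of summation.\<close>

lemma NF_disjoint_occurrences:
  assumes IH: "\<And>x. (x, w) \<in> word_less \<Longrightarrow> resolvable x"
    and g: "g1 \<in> R" "g2 \<in> R" and w: "w = u1 @ lm g1 @ b @ lm g2 @ v2"
  shows "NF (sandwich u1 g1 (b @ lm g2 @ v2)) = NF (sandwich (u1 @ lm g1 @ b) g2 v2)"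
proof (rule ext)
  fix p
  let ?S1 = "supp g1" and ?S2 = "supp g2" and ?L1 = "lm g1" and ?L2 = "lm g2"
  define M where "M = (\<lambda>y z. nfw (u1 @ y @ b @ z @ v2) p)"
  have fin: "finite ?S1" "finite ?S2" using rel_TV g by (auto simp: TV_def)
  have A: "(\<Sum>z\<in>?S2. g2 z * M y z) = 0" if "y \<in> ?S1" "y \<noteq> ?L1" for y
  proof -
    have "(u1 @ y @ b @ ?L2 @ v2, w) \<in> word_less"
      using word_less_lm[OF g(1), of y u1 "b @ ?L2 @ v2"] that w by (auto simp: supp_def)
    with IH resolvableD[OF _ g(2), of "u1 @ y @ b" v2 p] show ?thesis by (simp add: M_def)
  qed
  have B: "(\<Sum>y\<in>?S1. g1 y * M y z) = 0" if "z \<in> ?S2" "z \<noteq> ?L2" for z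
  proof -
    have "((u1 @ ?L1 @ b) @ z @ v2, (u1 @ ?L1 @ b) @ ?L2 @ v2) \<in> word_less"
      using word_less_lm[OF g(2), of z "u1 @ ?L1 @ b" v2] that by (auto simp: supp_def)
    with IH w resolvableD[OF _ g(1), of u1 "b @ z @ v2" p] show ?thesis by (simp add: M_def)
  qed
  have "(\<Sum>y\<in>?S1. g1 y * (\<Sum>z\<in>?S2. g2 z * M y z)) = (\<Sum>y\<in>{?L1}. g1 y * (\<Sum>z\<in>?S2. g2 z * M y z))"
    by (rule sum.mono_neutral_right) (use fin lm_in_supp[OF g(1)] A in auto)
  then have 1: "(\<Sum>y\<in>?S1. \<Sum>z\<in>?S2. g1 y * g2 z * M y z) = (\<Sum>z\<in>?S2. g2 z * M ?L1 z)"
    using lm_coeff[OF g(1)] by (simp add: sum_distrib_left mult.assoc)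
  have "(\<Sum>z\<in>?S2. g2 z * (\<Sum>y\<in>?S1. g1 y * M y z)) = (\<Sum>z\<in>{?L2}. g2 z * (\<Sum>y\<in>?S1. g1 y * M y z))"
    by (rule sum.mono_neutral_right) (use fin lm_in_supp[OF g(2)] B in auto)
  then have 2: "(\<Sum>y\<in>?S1. \<Sum>z\<in>?S2. g1 y * g2 z * M y z) = (\<Sum>y\<in>?S1. g1 y * M y ?L2)"
    using lm_coeff[OF g(2)] by (simp add: sum_distrib_left sum.swap[of _ ?S1] algebra_simps)
  show "NF (sandwich u1 g1 (b @ ?L2 @ v2)) p = NF (sandwich (u1 @ ?L1 @ b) g2 v2) p"
    using 1 2 by (simp add: NF_sandwich rel_TV g lincomb_def M_def)
qed

definition single_reduction_map :: "('x list \<Rightarrow> ('x,'k) tv) \<Rightarrow> bool" where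
  "single_reduction_map G \<longleftrightarrow>
     (\<forall>x. G x = wd x \<or> (\<exists>t g v. g \<in> R \<and> x = t @ lm g @ v \<and> G x = reduct t g v))"

lemma single_reduction_word:
  assumes IH: "\<And>x. (x, a @ W @ b) \<in> word_less \<Longrightarrow> resolvable x"
    and G: "single_reduction_map G" and x: "(x, W) \<in> word_less"
  shows "G x \<in> TV \<and> (\<forall>z\<in>supp (G x). (z, W) \<in> word_less) \<and> NF (sandwich a (G x) b) = nfw (a @ x @ b)"
proof -
  from G consider "G x = wd x" | t g v where "g \<in> R" "x = t @ lm g @ v" "G x = reduct t g v"
    unfolding single_reduction_map_def by blast
  then show ?thesis
  proof cases
    case 1
    then show ?thesis using x by (simp add: supp_wd lmul_wd rmul_wd NF_wd)
  next
    case 2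
    have "G x \<in> TV"
      using 2 by (simp add: reduct_TV rel_TV)
    moreover have "\<forall>z\<in>supp (G x). (z, W) \<in> word_less"
      using 2 supp_reduct[OF 2(1), of _ t v] x trans_word_less by auto
    moreover have "NF (sandwich a (G x) b) = nfw (a @ x @ b)"
    proof -
      have "resolvable (a @ x @ b)"
        using IH word_less_context[OF x] by blast
      then have "NF (sandwich (a @ t) g (v @ b)) = (\<lambda>_. 0)"
        using 2 unfolding resolvable_def by auto
      then show ?thesis
        using 2 by (simp add: sandwich_reduct rel_TV NF_reduct)
    qed
    ultimately show ?thesis by blast
  qed
qed

lemma single_reduction_lin_ext:
  assumes IH: "\<And>x. (x, a @ W @ b) \<in> word_less \<Longrightarrow> resolvable x"
    and G: "single_reduction_map G" and h: "h \<in> TV" "\<forall>z\<in>supp h. (z, W) \<in> word_less"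
  shows "lin_ext G h \<in> TV \<and> (\<forall>z\<in>supp (lin_ext G h). (z, W) \<in> word_less)
    \<and> NF (sandwich a (lin_ext G h) b) = NF (sandwich a h b)"
proof -
  note word = single_reduction_word[OF IH G]
  have fin: "finite (supp h)" using h TV_finite by auto
  have e: "lin_ext G h = lincomb (supp h) h G" by (rule lin_ext_eq_lincomb[OF fin]) simp
  have "NF (sandwich a (lin_ext G h) b) = lincomb (supp h) h (\<lambda>x. NF (sandwich a (G x) b))"
    unfolding e lmul_lincomb rmul_lincomb using fin word h by (subst NF_lincomb) (auto intro!: rmul_TV lmul_TV)
  also have "\<dots> = lincomb (supp h) h (\<lambda>x. NF (sandwich a (wd x) b))"
    unfolding lincomb_def using word h by (intro ext sum.cong refl) (simp add: lmul_wd rmul_wd NF_wd)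
  also have "\<dots> = NF (sandwich a h b)"
    by (subst (3) TV_expand[OF h(1)], unfold lmul_lincomb rmul_lincomb)
      (use fin in \<open>subst NF_lincomb, auto simp: lmul_wd rmul_wd\<close>)
  finally have "NF (sandwich a (lin_ext G h) b) = NF (sandwich a h b)" .
  moreover have "lin_ext G h \<in> TV"
    using e fin word h by (auto intro!: lincomb_TV)
  moreover have "\<forall>z\<in>supp (lin_ext G h). (z, W) \<in> word_less"
    using supp_lin_ext[of G h] word h by blast
  ultimately show ?thesis by blast
qed

lemma single_reduction_alt:
  assumes IH: "\<And>x. (x, a @ W @ b) \<in> word_less \<Longrightarrow> resolvable x"
    and G1: "single_reduction_map G1" and G2: "single_reduction_map G2"
    and h: "lin_ext G2 (wd W) \<in> TV" "\<forall>z\<in>supp (lin_ext G2 (wd W)). (z, W) \<in> word_less"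
  shows "alt (lin_ext G1) (lin_ext G2) (Suc j) (wd W) \<in> TV
      \<and> (\<forall>z\<in>supp (alt (lin_ext G1) (lin_ext G2) (Suc j) (wd W)). (z, W) \<in> word_less)
      \<and> NF (sandwich a (alt (lin_ext G1) (lin_ext G2) (Suc j) (wd W)) b)
         = NF (sandwich a (lin_ext G2 (wd W)) b)"
proof (induction j)
  case 0
  then show ?case using h by simp
next
  case (Suc j)
  let ?h = "alt (lin_ext G1) (lin_ext G2) (Suc j) (wd W)"
  show ?case
  proof (cases "even (Suc j)")
    case True
    then show ?thesis
      using single_reduction_lin_ext[OF IH G2, where h = ?h] Suc by simp
  next
    case False
    then show ?thesis
      using single_reduction_lin_ext[OF IH G1, where h = ?h] Suc by simp
  qed
qed

lemma Sop_wd: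
  "Sop R (wd y) = (if y \<in> lm ` R then (\<lambda>u. wd y u - (THE g. g \<in> R \<and> lm g = y) u) else wd y)"
  unfolding Sop_def by (rule lin_ext_wd)

lemma Sop_lm: "g \<in> R \<Longrightarrow> Sop R (wd (lm g)) = reduct [] g []"
proof -
  assume g: "g \<in> R"
  then have "(THE g'. g' \<in> R \<and> lm g' = lm g) = g"
    by (auto intro: the_equality lm_inj)
  then show ?thesis using g by (simp add: Sop_wd reduct_def)
qed

definition idS_word :: "nat \<Rightarrow> 'x list \<Rightarrow> ('x,'k) tv" where
  "idS_word m = (\<lambda>w. cat (wd (take m w)) (Sop R (wd (drop m w))))"

definition Sid_word :: "nat \<Rightarrow> 'x list \<Rightarrow> ('x,'k) tv" where
  "Sid_word m = (\<lambda>w. cat (Sop R (wd (take (length w - m) w))) (wd (drop (length w - m) w)))"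

lemma lin_ext_Sid_word_lm:
  "g \<in> R \<Longrightarrow> length s = m \<Longrightarrow> lin_ext (Sid_word m) (wd (lm g @ s)) = reduct [] g s"
  by (simp add: lin_ext_wd Sid_word_def cat_wd_right Sop_lm rmul_diff rmul_wd reduct_def)

lemma lin_ext_idS_word_lm:
  "g \<in> R \<Longrightarrow> length t = m \<Longrightarrow> lin_ext (idS_word m) (wd (t @ lm g)) = reduct t g []"
  by (simp add: lin_ext_wd idS_word_def cat_wd_left Sop_lm lmul_diff lmul_wd reduct_def)

lemma single_reduction_idS: "single_reduction_map (idS_word m)"
  unfolding single_reduction_map_def
proof
  fix x
  show "idS_word m x = wd x \<or> (\<exists>t g v. g \<in> R \<and> x = t @ lm g @ v \<and> idS_word m x = reduct t g v)"
  proof (cases "drop m x \<in> lm ` R")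
    case True
    then obtain g where g: "g \<in> R" "drop m x = lm g" by auto
    have "idS_word m x = sandwich (take m x) (reduct [] g []) []"
      using g by (simp add: idS_word_def cat_wd_left Sop_lm)
    also have "\<dots> = reduct (take m x) g []"
      using sandwich_reduct[OF rel_TV[OF g(1)], of "take m x" "[]" "[]" "[]"] by simp
    finally show ?thesis
      using g by (metis append_Nil2 append_take_drop_id)
  qed (simp add: idS_word_def cat_wd_left Sop_wd lmul_wd)
qed

lemma single_reduction_Sid: "single_reduction_map (Sid_word m)"
  unfolding single_reduction_map_def
proof
  fix x
  show "Sid_word m x = wd x \<or> (\<exists>t g v. g \<in> R \<and> x = t @ lm g @ v \<and> Sid_word m x = reduct t g v)"
  proof (cases "take (length x - m) x \<in> lm ` R")
    case True
    then obtain g where g: "g \<in> R" "take (length x - m) x = lm g" by auto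
    have "Sid_word m x = sandwich [] (reduct [] g []) (drop (length x - m) x)"
      using g by (simp add: Sid_word_def cat_wd_right Sop_lm)
    also have "\<dots> = reduct [] g (drop (length x - m) x)"
      using sandwich_reduct[OF rel_TV[OF g(1)], of "[]" "[]" "[]" "drop (length x - m) x"] by simp
    finally show ?thesis
      using g by (metis append_Nil append_take_drop_id)
  qed (simp add: Sid_word_def cat_wd_right Sop_wd rmul_wd)
qed

end


locale side_confluent_presentation = reduced_presentation N R
  for N :: nat and R :: "('x::{finite,linorder},'k::field) tv set" +
  assumes side_confluent: "side_confluent N R"
begin

lemma side_confluent_word:
  assumes "1 \<le> m" "m \<le> N - 1" "length W = N + m"
  obtains j where "alt (lin_ext (idS_word m)) (lin_ext (Sid_word m)) (Suc j) (wd W)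
      = alt (lin_ext (Sid_word m)) (lin_ext (idS_word m)) (Suc j) (wd W)"
proof -
  obtain k where k: "k \<ge> 1" "\<forall>f\<in>hom (N + m). alt (idtens m (Sop R)) (tensid (Sop R) m) k f
        = alt (tensid (Sop R) m) (idtens m (Sop R)) k f"
    using side_confluent assms(1,2) unfolding side_confluent_def by blast
  then obtain j where j: "k = Suc j" by (cases k) auto
  have "idtens m (Sop R) = lin_ext (idS_word m)" "tensid (Sop R) m = lin_ext (Sid_word m)"
    unfolding idtens_def tensid_def idS_word_def Sid_word_def by simp_all
  moreover have "alt (idtens m (Sop R)) (tensid (Sop R) m) k (wd W)
      = alt (tensid (Sop R) m) (idtens m (Sop R)) k (wd W)"
    using k(2) wd_hom[of W] assms(3) by auto
  ultimately show ?thesis using that by (simp only: j)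
qed

text \<open>Two overlapping occurrences inside a word \<open>W\<close> of length \<open>N + m\<close>: side-confluence
  says that alternately applying \<open>id \<otimes> S\<close> and \<open>S \<otimes> id\<close> to \<open>W\<close> gives the same result
  whichever is applied first, and every application is a reduction below \<open>W\<close>, which by the
  induction hypothesis does not change the normal form.\<close>

lemma NF_overlapping_occurrences:
  assumes IH: "\<And>x. (x, a @ W @ b) \<in> word_less \<Longrightarrow> resolvable x" and g: "g1 \<in> R" "g2 \<in> R"
    and W1: "W = lm g1 @ s" and W2: "W = t @ lm g2" and m: "length t = m" "1 \<le> m" "m \<le> N - 1"
  shows "NF (sandwich a g1 (s @ b)) = NF (sandwich (a @ t) g2 b)"
proof -
  have lW: "length W = N + m" using W2 m length_lm[OF g(2)] by simp
  then have Sid: "lin_ext (Sid_word m) (wd W) = reduct [] g1 s"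
    using W1 length_lm[OF g(1)] lin_ext_Sid_word_lm[OF g(1), of s m] by simp
  have idS: "lin_ext (idS_word m) (wd W) = reduct t g2 []"
    using W2 m lin_ext_idS_word_lm[OF g(2), of t m] by simp
  have hSid: "lin_ext (Sid_word m) (wd W) \<in> TV"
      "\<forall>z\<in>supp (lin_ext (Sid_word m) (wd W)). (z, W) \<in> word_less"
    unfolding Sid using reduct_TV[OF rel_TV[OF g(1)]] supp_reduct[OF g(1), of _ "[]" s] W1 by simp_all
  have hidS: "lin_ext (idS_word m) (wd W) \<in> TV"
      "\<forall>z\<in>supp (lin_ext (idS_word m) (wd W)). (z, W) \<in> word_less"
    unfolding idS using reduct_TV[OF rel_TV[OF g(2)]] supp_reduct[OF g(2), of _ t "[]"] W2 by simp_all
  obtain j where alt_eq: "alt (lin_ext (idS_word m)) (lin_ext (Sid_word m)) (Suc j) (wd W)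
      = alt (lin_ext (Sid_word m)) (lin_ext (idS_word m)) (Suc j) (wd W)"
    using side_confluent_word[OF m(2,3) lW] .
  have "NF (sandwich a (alt (lin_ext (idS_word m)) (lin_ext (Sid_word m)) (Suc j) (wd W)) b)
      = NF (sandwich a (lin_ext (Sid_word m) (wd W)) b)"
    using single_reduction_alt[where a = a and b = b, OF IH single_reduction_idS[of m]
        single_reduction_Sid[of m] hSid, where j = j] by blast
  moreover have "NF (sandwich a (alt (lin_ext (Sid_word m)) (lin_ext (idS_word m)) (Suc j) (wd W)) b)
      = NF (sandwich a (lin_ext (idS_word m) (wd W)) b)"
    using single_reduction_alt[where a = a and b = b, OF IH single_reduction_Sid[of m]
        single_reduction_idS[of m] hidS, where j = j] by blast
  ultimately have "NF (sandwich a (reduct [] g1 s) b) = NF (sandwich a (reduct t g2 []) b)"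
    using alt_eq Sid idS by simp
  moreover have "a @ lm g1 @ s @ b = a @ t @ lm g2 @ b"
    using W1 W2 by (metis append.assoc)
  ultimately show ?thesis
    using g by (simp add: sandwich_reduct rel_TV NF_reduct fun_eq_iff)
qed

lemma NF_two_occurrences:
  assumes IH: "\<And>x. (x, w) \<in> word_less \<Longrightarrow> resolvable x" and g: "g1 \<in> R" "g2 \<in> R"
    and w1: "w = u1 @ lm g1 @ v1" and w2: "w = u2 @ lm g2 @ v2" and l: "length u1 \<le> length u2"
  shows "NF (sandwich u1 g1 v1) = NF (sandwich u2 g2 v2)"
proof -
  have e: "u1 @ lm g1 @ v1 = u2 @ lm g2 @ v2" using w1 w2 by simp
  have lL: "length (lm g1) = length (lm g2)" using length_lm g by simp
  consider "length u1 = length u2" | "length u1 + N \<le> length u2"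
    | "length u1 < length u2" "length u2 < length u1 + N"
    using l by linarith
  then show ?thesis
  proof cases
    case 1
    then have "u1 = u2 \<and> lm g1 = lm g2 \<and> v1 = v2"
      using factorisations_aligned[OF e lL] by blast
    then show ?thesis using lm_inj[OF g] by metis
  next
    case 2
    then have "\<exists>b. u2 = u1 @ lm g1 @ b \<and> v1 = b @ lm g2 @ v2"
      using factorisations_disjoint[OF e] length_lm[OF g(1)] by simp
    then obtain b where b: "u2 = u1 @ lm g1 @ b" "v1 = b @ lm g2 @ v2" by blast
    have "w = u1 @ lm g1 @ b @ lm g2 @ v2" using w1 b by simp
    then show ?thesis using NF_disjoint_occurrences[OF IH g] b by simp
  next
    case 3
    have "\<exists>t s. u2 = u1 @ t \<and> v1 = s @ v2 \<and> lm g1 @ s = t @ lm g2 \<and> length t = length u2 - length u1"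
      by (rule factorisations_overlapping[OF e lL 3(1)]) (use length_lm[OF g(1)] 3(2) in simp)
    then obtain t s where ts: "u2 = u1 @ t" "v1 = s @ v2" "lm g1 @ s = t @ lm g2"
        "length t = length u2 - length u1"
      by blast
    have "w = u1 @ (lm g1 @ s) @ v2" using w1 ts(2) by simp
    with IH have IH': "\<And>x. (x, u1 @ (lm g1 @ s) @ v2) \<in> word_less \<Longrightarrow> resolvable x"
      by simp
    have m: "1 \<le> length t" "length t \<le> N - 1" using ts(4) 3 by linarith+
    have "NF (sandwich u1 g1 (s @ v2)) = NF (sandwich (u1 @ t) g2 v2)"
      by (rule NF_overlapping_occurrences[OF IH' g refl ts(3) refl m])
    then show ?thesis using ts(1,2) by simp
  qed
qed

lemma resolvable: "resolvable w"
proof (induction w rule: wf_induct_rule[OF wf_word_less])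
  case (1 w)
  show ?case unfolding resolvable_def
  proof (intro allI impI)
    fix u g v assume g: "g \<in> R" and w: "w = u @ lm g @ v"
    then have "\<not> nf_word R w" by (auto simp: nf_word_def)
    then obtain u0 g0 v0 where o: "occurrence w = (u0, g0, v0)" "g0 \<in> R" "w = u0 @ lm g0 @ v0"
      by (rule obtain_occurrence)
    have "nfw w = (\<lambda>x. nfw w x - NF (sandwich u0 g0 v0) x)"
      using nfw_occurrence[OF \<open>\<not> nf_word R w\<close> o(1)] o by (simp add: NF_reduct)
    then have "NF (sandwich u0 g0 v0) = (\<lambda>_. 0)" by (simp add: fun_eq_iff)
    moreover have "NF (sandwich u g v) = NF (sandwich u0 g0 v0)"
    proof (cases "length u \<le> length u0")
      case True
      then show ?thesis using NF_two_occurrences[OF 1 g o(2) w o(3)] by simp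
    next
      case False
      then show ?thesis using NF_two_occurrences[OF 1 o(2) g o(3) w] by simp
    qed
    ultimately show "NF (sandwich u g v) = (\<lambda>_. 0)" by simp
  qed
qed

lemma NF_sandwich_rel: "g \<in> R \<Longrightarrow> NF (sandwich u g v) = (\<lambda>_. 0)"
  using resolvable[of "u @ lm g @ v"] unfolding resolvable_def by auto

end


section \<open>The reduction map \<open>\<phi>\<close> and its kernel\<close>

context side_confluent_presentation
begin

lemma red_NF:
  assumes r: "red R f f'" and f: "f \<in> TV"
  shows "f' \<in> TV \<and> NF f' = NF f"
proof -
  obtain u v g where g: "g \<in> R" and e: "f' = (\<lambda>x. f x - f (u @ lm g @ v) * sandwich u g v x)"
    using r unfolding red_def cat_sandwich by blast
  then have e': "f' = (\<lambda>x. 1 * f x + (- f (u @ lm g @ v)) * sandwich u g v x)"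
    by simp
  have s: "sandwich u g v \<in> TV" using sandwich_TV rel_TV g by blast
  have "f' \<in> TV" unfolding e' using f s by (rule TV_lin)
  moreover have "NF f' = NF f"
    unfolding e' NF_lin[OF f s] NF_sandwich_rel[OF g] by simp
  ultimately show ?thesis by blast
qed

lemma reds_NF: "(red R)\<^sup>*\<^sup>* f h \<Longrightarrow> f \<in> TV \<Longrightarrow> h \<in> TV \<and> NF h = NF f"
  by (induction rule: rtranclp_induct) (auto dest: red_NF)

definition reducible_supp :: "('x,'k) tv \<Rightarrow> 'x list set" where
  "reducible_supp f = {x \<in> supp f. \<not> nf_word R x}"

text \<open>A reduction removes the reduced word from the reducible support and adds only smaller
  words, so the reducible support decreases in the multiset extension of the word order.\<close>

lemma reducible_supp_decreases:
  assumes f: "f \<in> TV" and g: "g \<in> R" and w: "u @ lm g @ v \<in> reducible_supp f"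
  defines "f' \<equiv> \<lambda>x. f x - f (u @ lm g @ v) * sandwich u g v x"
  shows "(mset_set (reducible_supp f'), mset_set (reducible_supp f)) \<in> mult word_less"
proof -
  let ?w = "u @ lm g @ v" and ?B = "reducible_supp f" and ?B' = "reducible_supp f'"
  have "f' \<in> TV" unfolding f'_def using f sandwich_TV[OF rel_TV[OF g]] TV_lin[of f _ 1 "- _"] by simp
  then have fin: "finite ?B" "finite ?B'" using f by (auto simp: reducible_supp_def TV_def)
  have new_smaller: "(x, ?w) \<in> word_less" if x: "x \<notin> ?B" "x \<in> ?B'" for x
  proof -
    have "sandwich u g v x \<noteq> 0" using x by (auto simp: reducible_supp_def supp_def f'_def)
    then obtain y where y: "x = u @ y @ v" "g y \<noteq> 0" using sandwich_nonzero by blast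
    have "x \<noteq> ?w"
      using x lm_coeff[OF g] by (auto simp: reducible_supp_def supp_def f'_def)
    then show ?thesis using word_less_lm[OF g y(2)] y by auto
  qed
  have w_gone: "?w \<notin> ?B'"
    using lm_coeff[OF g] by (simp add: reducible_supp_def supp_def f'_def)
  let ?I = "?B' \<inter> ?B" and ?K = "?B' - ?B" and ?J = "?B - ?B'"
  have e1: "mset_set ?B' = mset_set ?I + mset_set ?K"
    using fin by (subst mset_set_Union[symmetric]) (auto intro: arg_cong[where f=mset_set])
  have e2: "mset_set ?B = mset_set ?I + mset_set ?J"
    using fin by (subst mset_set_Union[symmetric]) (auto intro: arg_cong[where f=mset_set])
  have "(mset_set ?I + mset_set ?K, mset_set ?I + mset_set ?J) \<in> mult word_less"
  proof (rule one_step_implies_mult)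
    have "?w \<in> ?J" using w w_gone by blast
    then show "mset_set ?J \<noteq> {#}" using fin by (metis finite_Diff mset_set_empty_iff empty_iff)
    show "\<forall>k\<in>#mset_set ?K. \<exists>j\<in>#mset_set ?J. (k, j) \<in> word_less"
      using new_smaller w w_gone fin by auto
  qed
  then show ?thesis using e1 e2 by simp
qed

lemma reduction_terminates: "f \<in> TV \<Longrightarrow> \<exists>h. (red R)\<^sup>*\<^sup>* f h \<and> nf R h"
proof (induction f rule: wf_induct_rule[OF wf_inv_image[OF wf_mult[OF wf_word_less],
      of "\<lambda>f. mset_set (reducible_supp f)"]])
  case (1 f)
  show ?case
  proof (cases "reducible_supp f = {}")
    case True
    then have "nf R f" by (auto simp: reducible_supp_def nf_def supp_def)
    then show ?thesis by blast
  next
    case False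
    then obtain w where w: "w \<in> reducible_supp f" by blast
    then obtain u g v where g: "g \<in> R" and wd: "w = u @ lm g @ v"
      by (auto simp: reducible_supp_def nf_word_def)
    define f' where "f' = (\<lambda>x. f x - f (u @ lm g @ v) * sandwich u g v x)"
    have r: "red R f f'" unfolding red_def cat_sandwich f'_def using g by blast
    have "(f', f) \<in> inv_image (mult word_less) (\<lambda>f. mset_set (reducible_supp f))"
      using reducible_supp_decreases[OF 1(2) g] w wd by (simp add: f'_def)
    with 1 red_NF[OF r] obtain h where "(red R)\<^sup>*\<^sup>* f' h" "nf R h" by blast
    then show ?thesis using r by (meson converse_rtranclp_into_rtranclp)
  qed
qed

lemma phi_eq_NF: "f \<in> TV \<Longrightarrow> phi R f = NF f"
proof -
  assume f: "f \<in> TV"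
  obtain h where h: "(red R)\<^sup>*\<^sup>* f h" "nf R h" using reduction_terminates[OF f] by blast
  have "h = NF f" using reds_NF[OF h(1) f] NF_nf h(2) by metis
  then show ?thesis
    unfolding phi_def using h reds_NF[of f] f NF_nf by (intro the_equality) metis+
qed

lemma phi_wd: "phi R (wd x) = nfw x"
  using phi_eq_NF[of "wd x"] by (simp add: NF_wd)

lemma phi_reduction_operator: "reduction_operator m (phi R)"
  unfolding reduction_operator_def
proof (intro conjI ballI allI)
  fix f g :: "('x,'k) tv" and c assume f: "f \<in> hom m"
  then have fT: "f \<in> TV" using hom_subset_TV by blast
  show "phi R f \<in> hom m" using NF_hom[OF f] phi_eq_NF[OF fT] by simp
  show "phi R (phi R f) = phi R f"
    using NF_props[OF fT] phi_eq_NF[OF fT] phi_eq_NF NF_nf by simp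
  show "phi R (\<lambda>x. c * f x) = (\<lambda>x. c * phi R f x)"
    using NF_lin[OF fT fT, of c 0] phi_eq_NF[OF fT] phi_eq_NF[OF TV_smult[OF fT]] by simp
  assume "g \<in> hom m"
  then have gT: "g \<in> TV" using hom_subset_TV by blast
  show "phi R (\<lambda>x. f x + g x) = (\<lambda>x. phi R f x + phi R g x)"
    using NF_lin[OF fT gT, of 1 1] phi_eq_NF[OF fT] phi_eq_NF[OF gT] phi_eq_NF[OF TV_add[OF fT gT]]
    by simp
next
  fix y :: "'x list"
  show "phi R (wd y) = wd y \<or> (\<forall>x. phi R (wd y) x \<noteq> 0 \<longrightarrow> x < y)"
  proof (cases "nf_word R y")
    case True
    then show ?thesis by (simp add: phi_wd nfw_nf_word)
  next
    case False
    have "x < y" if x: "nfw y x \<noteq> 0" for x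
    proof -
      have "x \<noteq> y" using x nfw_props[of y] False by (auto simp: nf_def)
      then show "x < y" using nfw_props[of y] x by (auto simp: supp_def word_less_def)
    qed
    then show ?thesis by (simp add: phi_wd)
  qed
qed

abbreviation Icomp_gens :: "nat \<Rightarrow> ('x,'k) tv set" where
  "Icomp_gens m \<equiv> (\<Union>i\<in>{0..m-N}. tensp (tensp (hom i) (Rbar R)) (hom (m - N - i)))"

definition rel_sandwiches :: "nat \<Rightarrow> ('x,'k) tv set" where
  "rel_sandwiches m = {sandwich u g v | u g v. g \<in> R \<and> length u + N + length v = m}"

lemma rel_sandwich_in_Icomp:
  assumes g: "g \<in> R" and l: "length u + N + length v = m"
  shows "sandwich u g v \<in> lspan (Icomp_gens m)"
proof -
  have gR: "g \<in> Rbar R" unfolding Rbar_def by (rule lspan_gen[OF g])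
  have "cat (wd u) g \<in> tensp (hom (length u)) (Rbar R)"
    unfolding tensp_def by (rule lspan_gen) (use wd_hom gR in blast)
  moreover have lv: "m - N - length u = length v" using l by simp
  ultimately have "cat (cat (wd u) g) (wd v) \<in> tensp (tensp (hom (length u)) (Rbar R)) (hom (m - N - length u))"
    unfolding lv tensp_def[of _ "hom (length v)"] by (intro lspan_gen) (use wd_hom in blast)
  moreover have "length u \<in> {0..m-N}" using l by auto
  ultimately have "cat (cat (wd u) g) (wd v) \<in> Icomp_gens m" by blast
  then show ?thesis unfolding cat_sandwich[symmetric] by (rule lspan_gen)
qed

lemma rel_sandwiches_kernel: "f \<in> lspan (rel_sandwiches m) \<Longrightarrow> f \<in> hom m \<and> NF f = (\<lambda>_. 0)"
proof (induction rule: lspan.induct)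
  case lspan_zero
  then show ?case by (simp add: hom_def supp_def NF_zero)
next
  case (lspan_step f g c)
  from lspan_step(2) obtain u h v where g: "g = sandwich u h v" "h \<in> R" "length u + N + length v = m"
    by (auto simp: rel_sandwiches_def)
  have gT: "g \<in> TV" using g sandwich_TV rel_TV by blast
  have "length x = m" if nz: "g x \<noteq> 0" for x
  proof -
    obtain y where "x = u @ y @ v" "h y \<noteq> 0" using nz g(1) sandwich_nonzero by blast
    then show ?thesis using rel_length[OF g(2)] g(3) by simp
  qed
  then have gm: "g \<in> hom m" using gT by (auto simp: hom_def TV_def)
  have fm: "f \<in> hom m" and fT: "f \<in> TV" using lspan_step.IH hom_subset_TV by blast+
  have "(\<lambda>x. c * g x + f x) \<in> lspan {g, f}"
    by (intro lspan_lin lspan_gen) simp_all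
  then have "(\<lambda>x. c * g x + f x) \<in> hom m"
    by (rule lspan_hom) (use gm fm in blast)
  moreover have "NF (\<lambda>x. c * g x + f x) = (\<lambda>_. 0)"
    using NF_lin[OF gT fT, of c 1] NF_sandwich_rel[OF g(2)] g(1) lspan_step.IH by simp
  ultimately show ?case by blast
qed

lemma sandwich_span_rel_sandwiches:
  "r \<in> lspan R \<Longrightarrow> length u + N + length v = m \<Longrightarrow> sandwich u r v \<in> lspan (rel_sandwiches m)"
proof (induction rule: lspan.induct)
  case lspan_zero
  then show ?case using lspan.lspan_zero by (simp add: sandwich_zero)
next
  case (lspan_step f g c)
  have "sandwich u g v \<in> lspan (rel_sandwiches m)"
    by (rule lspan_gen) (use lspan_step in \<open>auto simp: rel_sandwiches_def\<close>)
  then show ?case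
    unfolding sandwich_lin by (rule lspan_lin[OF lspan_step.IH[OF lspan_step.prems]])
qed

lemma cat_span_rel_sandwiches:
  assumes p: "p \<in> hom i" and r: "r \<in> lspan R" and q: "q \<in> hom j" and l: "i + N + j = m"
  shows "cat (cat p r) q \<in> lspan (rel_sandwiches m)"
proof -
  have pT: "p \<in> TV" and qT: "q \<in> TV" using p q hom_subset_TV by blast+
  define A where "A = supp p"
  define B where "B = supp q"
  have "cat (cat (lincomb A p wd) r) (lincomb B q wd) = lincomb A p (\<lambda>u. lincomb B q (\<lambda>v. sandwich u r v))"
    by (simp add: cat_lincomb_left cat_lincomb_right cat_sandwich) (rule lincomb_swap)
  then have "cat (cat p r) q = lincomb A p (\<lambda>u. lincomb B q (\<lambda>v. sandwich u r v))"
    using TV_expand[OF pT] TV_expand[OF qT] by (simp add: A_def B_def)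
  also have "\<dots> \<in> lspan (rel_sandwiches m)"
  proof (rule lspan_lincomb)
    fix u assume u: "u \<in> A"
    show "lincomb B q (\<lambda>v. sandwich u r v) \<in> lspan (rel_sandwiches m)"
    proof (rule lspan_lincomb)
      fix v assume "v \<in> B"
      then have "length u = i" "length v = j" using u p q by (auto simp: A_def B_def hom_def supp_def)
      then show "sandwich u r v \<in> lspan (rel_sandwiches m)"
        using sandwich_span_rel_sandwiches[OF r, of u v m] l by simp
    qed (use qT TV_finite B_def in blast)
  qed (use pT TV_finite A_def in blast)
  finally show ?thesis .
qed

lemma tensp_span_rel_sandwiches:
  assumes "t \<in> tensp (tensp (hom i) (Rbar R)) (hom j)" "i + N + j = m"
  shows "t \<in> lspan (rel_sandwiches m)"
  using assms(1) unfolding tensp_def[of _ "hom j"]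
proof (induction rule: lspan.induct)
  case lspan_zero
  show ?case by (rule lspan.lspan_zero)
next
  case (lspan_step f g c)
  from lspan_step(2) obtain p q where g: "g = cat p q" "p \<in> tensp (hom i) (Rbar R)" "q \<in> hom j"
    by blast
  have "cat p q \<in> lspan (rel_sandwiches m)"
    using g(2) unfolding tensp_def
  proof (induction rule: lspan.induct)
    case lspan_zero
    show ?case unfolding cat_zero_left by (rule lspan.lspan_zero)
  next
    case (lspan_step f' g' c')
    from lspan_step(2) obtain p' r where "g' = cat p' r" "p' \<in> hom i" "r \<in> Rbar R" by blast
    then have "cat g' q \<in> lspan (rel_sandwiches m)"
      using cat_span_rel_sandwiches g(3) assms(2) by (simp add: Rbar_def)
    then show ?case unfolding cat_lin_left by (rule lspan_lin[OF lspan_step.IH])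
  qed
  then show ?case unfolding g(1) by (rule lspan_lin[OF lspan_step.IH])
qed

lemma Icomp_gens_span_rel_sandwiches:
  "f \<in> lspan (Icomp_gens m) \<Longrightarrow> N \<le> m \<Longrightarrow> f \<in> lspan (rel_sandwiches m)"
proof (induction rule: lspan.induct)
  case lspan_zero
  show ?case by (rule lspan.lspan_zero)
next
  case (lspan_step f g c)
  from lspan_step(2) obtain i where i: "i \<in> {0..m-N}"
    "g \<in> tensp (tensp (hom i) (Rbar R)) (hom (m - N - i))" by blast
  have "g \<in> lspan (rel_sandwiches m)"
    by (rule tensp_span_rel_sandwiches[OF i(2)]) (use i lspan_step.prems in auto)
  then show ?case by (rule lspan_lin[OF lspan_step.IH[OF lspan_step.prems]])
qed

lemma wd_minus_nfw_in_Icomp: "length w = m \<Longrightarrow> (\<lambda>x. wd w x - nfw w x) \<in> lspan (Icomp_gens m)"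
proof (induction w rule: wf_induct_rule[OF wf_word_less])
  case (1 w)
  show ?case
  proof (cases "nf_word R w")
    case True
    then show ?thesis using lspan.lspan_zero by (simp add: nfw_nf_word)
  next
    case False
    then obtain u g v where o: "occurrence w = (u, g, v)" "g \<in> R" "w = u @ lm g @ v"
      by (rule obtain_occurrence)
    define d where "d = reduct u g v"
    have dT: "d \<in> TV" unfolding d_def by (rule reduct_TV[OF rel_TV[OF o(2)]])
    have "(\<lambda>x. d x - NF d x) = lincomb (supp d) d (\<lambda>y x. wd y x - nfw y x)"
      unfolding NF_def lin_ext_eq_lincomb[OF TV_finite[OF dT] order_refl] lincomb_diff
      using TV_expand[OF dT] by simp
    also have "\<dots> \<in> lspan (Icomp_gens m)"
    proof (rule lspan_lincomb[OF TV_finite[OF dT]])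
      fix y assume "y \<in> supp d"
      then have "(y, w) \<in> word_less" using supp_reduct[OF o(2)] o(3) by (simp add: d_def)
      moreover from this have "length y = m" using 1(2) by (simp add: word_less_def)
      ultimately show "(\<lambda>x. wd y x - nfw y x) \<in> lspan (Icomp_gens m)" using 1(1) by blast
    qed
    finally have A: "(\<lambda>x. d x - NF d x) \<in> lspan (Icomp_gens m)" .
    have B: "sandwich u g v \<in> lspan (Icomp_gens m)"
      by (rule rel_sandwich_in_Icomp[OF o(2)]) (use 1(2) o(3) length_lm[OF o(2)] in simp)
    have "(\<lambda>x. wd w x - nfw w x) = (\<lambda>x. sandwich u g v x + (d x - NF d x))"
      using nfw_occurrence[OF False o(1)] o(3) by (simp add: d_def reduct_def fun_eq_iff)
    then show ?thesis using lspan_add[OF B A] by simp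
  qed
qed

lemma hom_minus_NF_in_Icomp: "f \<in> hom m \<Longrightarrow> (\<lambda>x. f x - NF f x) \<in> lspan (Icomp_gens m)"
proof -
  assume f: "f \<in> hom m"
  then have fT: "f \<in> TV" using hom_subset_TV by blast
  have "(\<lambda>x. f x - NF f x) = lincomb (supp f) f (\<lambda>y x. wd y x - nfw y x)"
    unfolding NF_def lin_ext_eq_lincomb[OF TV_finite[OF fT] order_refl] lincomb_diff
    using TV_expand[OF fT] by simp
  also have "\<dots> \<in> lspan (Icomp_gens m)"
  proof (rule lspan_lincomb[OF TV_finite[OF fT]])
    fix y assume "y \<in> supp f"
    then have "length y = m" using f by (simp add: hom_def supp_def)
    then show "(\<lambda>x. wd y x - nfw y x) \<in> lspan (Icomp_gens m)" by (rule wd_minus_nfw_in_Icomp)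
  qed
  finally show ?thesis .
qed

lemma phi_kernel: "{f \<in> hom m. phi R f = (\<lambda>_. 0)} = Icomp N R m"
proof (cases "m < N")
  case True
  have "f = (\<lambda>_. 0)" if f: "f \<in> hom m" "phi R f = (\<lambda>_. 0)" for f
  proof -
    have fT: "f \<in> TV" using f hom_subset_TV by blast
    have "nf R f"
      using f(1) True length_lm by (fastforce simp: nf_def nf_word_def hom_def)
    then show ?thesis using NF_nf[OF fT] phi_eq_NF[OF fT] f(2) by simp
  qed
  moreover have "phi R (\<lambda>_. 0) = (\<lambda>_. 0)"
    using phi_eq_NF[OF TV_zero] NF_zero by simp
  moreover have "(\<lambda>_. 0) \<in> hom m" by (simp add: hom_def supp_def)
  ultimately have "{f \<in> hom m. phi R f = (\<lambda>_. 0)} = {\<lambda>_. 0}" by blast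
  then show ?thesis using True by (simp add: Icomp_def)
next
  case False
  have "{f \<in> hom m. phi R f = (\<lambda>_. 0)} = lspan (Icomp_gens m)"
  proof (intro equalityI subsetI)
    fix f assume "f \<in> {f \<in> hom m. phi R f = (\<lambda>_. 0)}"
    then show "f \<in> lspan (Icomp_gens m)"
      using hom_minus_NF_in_Icomp phi_eq_NF hom_subset_TV by fastforce
  next
    fix f assume "f \<in> lspan (Icomp_gens m)"
    then have "f \<in> lspan (rel_sandwiches m)"
      using False by (intro Icomp_gens_span_rel_sandwiches) simp_all
    then have "f \<in> hom m \<and> NF f = (\<lambda>_. 0)" by (rule rel_sandwiches_kernel)
    then show "f \<in> {f \<in> hom m. phi R f = (\<lambda>_. 0)}"
      using phi_eq_NF hom_subset_TV by force
  qed
  then show ?thesis using False by (simp add: Icomp_def)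
qed

end


section \<open>The normalised Koszul complex\<close>

context side_confluent_presentation
begin

lemma NF_hpart: "f \<in> TV \<Longrightarrow> NF (hpart m f) = hpart m (NF f)"
proof (rule ext)
  fix u assume f: "f \<in> TV"
  have fin: "finite (supp f)" using f TV_finite by blast
  have s: "supp (hpart m f) \<subseteq> supp f" by (auto simp: hpart_def supp_def)
  have len: "length u = length w" if "nfw w u \<noteq> 0" for w
    using that nfw_props[of w] by (auto simp: supp_def word_less_def)
  have "NF (hpart m f) u = (\<Sum>w\<in>supp f. hpart m f w * nfw w u)"
    unfolding NF_def by (subst lin_ext_eq_lincomb[OF fin s]) (simp add: lincomb_def)
  also have "\<dots> = (\<Sum>w\<in>supp f. if length u = m then f w * nfw w u else 0)"
    using len by (intro sum.cong refl) (fastforce simp: hpart_def)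
  also have "\<dots> = hpart m (NF f) u"
    unfolding NF_def hpart_def by (subst lin_ext_eq_lincomb[OF fin]) (auto simp: lincomb_def)
  finally show "NF (hpart m f) u = hpart m (NF f) u" .
qed

lemma hpart_hom: "f \<in> TV \<Longrightarrow> hpart m f \<in> hom m"
proof -
  assume "f \<in> TV"
  moreover have "supp (hpart m f) \<subseteq> supp f" by (auto simp: hpart_def supp_def)
  ultimately have "finite (supp (hpart m f))" unfolding TV_def by (auto intro: finite_subset)
  then show ?thesis unfolding hom_def by (simp add: hpart_def)
qed

lemma Ideal_iff_NF_zero: "f \<in> TV \<Longrightarrow> f \<in> Ideal N R \<longleftrightarrow> NF f = (\<lambda>_. 0)"
proof -
  assume f: "f \<in> TV"
  have "hpart m f \<in> Icomp N R m \<longleftrightarrow> NF (hpart m f) = (\<lambda>_. 0)" for m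
  proof -
    have h: "hpart m f \<in> hom m" by (rule hpart_hom[OF f])
    then have "phi R (hpart m f) = NF (hpart m f)" using hom_subset_TV phi_eq_NF by blast
    then show ?thesis using h phi_kernel[of m, symmetric] by simp
  qed
  then have "f \<in> Ideal N R \<longleftrightarrow> (\<forall>m. hpart m (NF f) = (\<lambda>_. 0))"
    using f unfolding Ideal_def NF_hpart[OF f] by blast
  also have "\<dots> \<longleftrightarrow> NF f = (\<lambda>_. 0)"
  proof
    assume "\<forall>m. hpart m (NF f) = (\<lambda>_. 0)"
    then have "hpart (length x) (NF f) x = 0" for x by simp
    then show "NF f = (\<lambda>_. 0)" by (auto simp: hpart_def)
  qed (simp add: hpart_def)
  finally show ?thesis .
qed

lemma cls_eq_NF: "f \<in> TV \<Longrightarrow> cls N R f = {g \<in> TV. NF g = NF f}"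
proof -
  assume f: "f \<in> TV"
  have "(\<lambda>x. g x - f x) \<in> Ideal N R \<longleftrightarrow> NF g = NF f" if g: "g \<in> TV" for g
    using Ideal_iff_NF_zero[OF TV_diff[OF g f]] NF_diff[OF g f] by (simp add: fun_eq_iff)
  then show ?thesis unfolding cls_def by blast
qed

lemma rep_cls: "f \<in> TV \<Longrightarrow> rep (cls N R f) \<in> TV \<and> NF (rep (cls N R f)) = NF f"
proof -
  assume f: "f \<in> TV"
  then have "f \<in> cls N R f" using cls_eq_NF[OF f] by simp
  then have "rep (cls N R f) \<in> cls N R f" unfolding rep_def by (rule someI[of "\<lambda>x. x \<in> cls N R f"])
  then show ?thesis using cls_eq_NF[OF f] by simp
qed

lemma phibar_cls: "f \<in> TV \<Longrightarrow> phibar R (cls N R f) = NF f"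
  using rep_cls phi_eq_NF unfolding phibar_def by simp

lemma AJ_classes: "F \<in> AJ N R n \<Longrightarrow> \<forall>v. \<exists>g\<in>TV. F v = cls N R g"
  unfolding AJ_def
proof (induction rule: atspan.induct)
  case atspan_zero
  then show ?case using TV_zero by (auto simp: Azero_def)
next
  case (atspan_step F G c)
  from atspan_step(2) obtain a j where G: "G = etens N R a j" "a \<in> Aset N R" by blast
  then obtain t where t: "t \<in> TV" "a = cls N R t" by (auto simp: Aset_def)
  show ?case
  proof
    fix v
    obtain g where g: "g \<in> TV" "F v = cls N R g" using atspan_step.IH by blast
    have "rep a \<in> TV" using rep_cls t by simp
    then have "rep (G v) \<in> TV"
      using G rep_cls[OF TV_smult[of "rep a" "j v"]] by (simp add: etens_def)
    moreover have "rep (F v) \<in> TV" using rep_cls g by simp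
    ultimately have "(\<lambda>x. c * rep (G v) x + 1 * rep (F v) x) \<in> TV" by (rule TV_lin)
    then show "\<exists>g\<in>TV. cls N R (\<lambda>x. c * rep (G v) x + rep (F v) x) = cls N R g" by auto
  qed
qed

lemma AJ_rep: "F \<in> AJ N R n \<Longrightarrow> rep (F v) \<in> TV \<and> phibar R (F v) = NF (rep (F v))"
proof -
  assume F: "F \<in> AJ N R n"
  then obtain g where "g \<in> TV" "F v = cls N R g" using AJ_classes by blast
  then have "rep (F v) \<in> TV" using rep_cls by simp
  then show ?thesis unfolding phibar_def using phi_eq_NF by simp
qed

lemma phin_eq_lincomb:
  "F \<in> AJ N R n \<Longrightarrow> phin R l F = lincomb (words l) (\<lambda>_. 1) (\<lambda>v. rmul (NF (rep (F v))) v)"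
  unfolding phin_def lincomb_def cat_wd_right using AJ_rep by simp

lemma NF_rmul_nfw: "NF (rmul (nfw y) v) = nfw (y @ v)"
proof (induction y rule: wf_induct_rule[OF wf_word_less])
  case (1 y)
  show ?case
  proof (cases "nf_word R y")
    case True
    then show ?thesis by (simp add: nfw_nf_word rmul_wd NF_wd)
  next
    case False
    then obtain u g v0 where o: "occurrence y = (u, g, v0)" "g \<in> R" "y = u @ lm g @ v0"
      by (rule obtain_occurrence)
    define d where "d = reduct u g v0"
    have dT: "d \<in> TV" unfolding d_def by (rule reduct_TV[OF rel_TV[OF o(2)]])
    have lower: "\<And>z. z \<in> supp d \<Longrightarrow> (z, y) \<in> word_less"
      unfolding d_def using supp_reduct[OF o(2)] o(3) by auto
    have fin: "finite (supp d)" using dT TV_finite by blast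
    have e: "nfw y = lincomb (supp d) d nfw"
      using nfw_occurrence[OF False o(1)] lin_ext_eq_lincomb[OF fin order_refl, of nfw]
      by (simp add: d_def NF_def)
    have "NF (rmul (nfw y) v) = lincomb (supp d) d (\<lambda>x. NF (rmul (nfw x) v))"
      unfolding e rmul_lincomb using fin nfw_TV by (subst NF_lincomb) (auto intro: rmul_TV)
    also have "\<dots> = lincomb (supp d) d (\<lambda>x. NF (rmul (wd x) v))"
      unfolding lincomb_def using 1 lower by (intro ext sum.cong refl) (simp add: rmul_wd NF_wd)
    also have "\<dots> = NF (rmul d v)"
      by (subst (3) TV_expand[OF dT], unfold rmul_lincomb)
        (use fin in \<open>subst NF_lincomb, auto simp: rmul_wd\<close>)
    also have "\<dots> = nfw (y @ v)"
    proof -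
      have "rmul d v = reduct u g (v0 @ v)"
        using sandwich_reduct[OF rel_TV[OF o(2)], of "[]" u v0 v] by (simp add: d_def)
      then show ?thesis using NF_reduct[OF o(2)] NF_sandwich_rel[OF o(2)] o(3) by simp
    qed
    finally show ?thesis .
  qed
qed

lemma NF_rmul_NF: "g \<in> TV \<Longrightarrow> NF (rmul (NF g) v) = NF (rmul g v)"
proof -
  assume gT: "g \<in> TV"
  have fin: "finite (supp g)" using gT TV_finite by blast
  have e: "NF g = lincomb (supp g) g nfw"
    unfolding NF_def by (rule lin_ext_eq_lincomb[OF fin]) simp
  have "NF (rmul (NF g) v) = lincomb (supp g) g (\<lambda>x. NF (rmul (nfw x) v))"
    unfolding e rmul_lincomb using fin nfw_TV by (subst NF_lincomb) (auto intro: rmul_TV)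
  also have "\<dots> = lincomb (supp g) g (\<lambda>x. NF (rmul (wd x) v))"
    by (simp add: NF_rmul_nfw rmul_wd NF_wd)
  also have "\<dots> = NF (rmul g v)"
    by (subst (3) TV_expand[OF gT], unfold rmul_lincomb)
      (use fin in \<open>subst NF_lincomb, auto simp: rmul_wd\<close>)
  finally show ?thesis .
qed

definition tensid_phi_word :: "nat \<Rightarrow> 'x list \<Rightarrow> ('x,'k) tv" where
  "tensid_phi_word l = (\<lambda>w. cat (phi R (wd (take (length w - l) w))) (wd (drop (length w - l) w)))"

lemma tensid_phi_rmul:
  assumes h: "h \<in> TV" and l: "l \<le> length v"
  shows "lin_ext (tensid_phi_word l) (rmul h v)
    = rmul (NF (rmul h (take (length v - l) v))) (drop (length v - l) v)"
proof -
  have fin: "finite (supp h)" using h TV_finite by blast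
  let ?v1 = "take (length v - l) v" and ?v2 = "drop (length v - l) v"
  have word: "tensid_phi_word l (y @ v) = rmul (nfw (y @ ?v1)) ?v2" for y
  proof -
    have "length (y @ v) - l = length y + (length v - l)" using l by simp
    then show ?thesis unfolding tensid_phi_word_def by (simp add: phi_wd cat_wd_right)
  qed
  have "lin_ext (tensid_phi_word l) (rmul h v) = lincomb (supp h) h (\<lambda>y. tensid_phi_word l (y @ v))"
    by (subst TV_expand[OF h], unfold rmul_lincomb)
      (use fin in \<open>subst lin_ext_lincomb, auto simp: rmul_wd lin_ext_wd\<close>)
  also have "\<dots> = lincomb (supp h) h (\<lambda>y. rmul (nfw (y @ ?v1)) ?v2)"
    using word by simp
  also have "\<dots> = rmul (NF (rmul h ?v1)) ?v2"
  proof -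
    have "NF (rmul h ?v1) = lincomb (supp h) h (\<lambda>y. nfw (y @ ?v1))"
      by (subst TV_expand[OF h], unfold rmul_lincomb)
        (use fin in \<open>subst NF_lincomb, auto simp: rmul_wd NF_wd\<close>)
    then show ?thesis by (simp add: rmul_lincomb)
  qed
  finally show ?thesis .
qed

lemma tensid_phi_phin:
  assumes F: "F \<in> AJ N R n" and l: "l' \<le> l"
  shows "tensid (phi R) l' (phin R l F)
    = lincomb (words l) (\<lambda>_. 1) (\<lambda>v. rmul (NF (rmul (rep (F v)) (take (l - l') v))) (drop (l - l') v))"
proof -
  have QT: "rep (F v) \<in> TV" for v using AJ_rep[OF F] by blast
  have "tensid (phi R) l' (phin R l F)
      = lincomb (words l) (\<lambda>_. 1) (\<lambda>v. lin_ext (tensid_phi_word l') (rmul (NF (rep (F v))) v))"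
    unfolding tensid_def tensid_phi_word_def[symmetric] phin_eq_lincomb[OF F]
    by (rule lin_ext_lincomb[OF finite_words]) (use QT NF_TV rmul_TV in blast)
  also have "\<dots> = lincomb (words l) (\<lambda>_. 1) (\<lambda>v. rmul (NF (rmul (rep (F v)) (take (l - l') v))) (drop (l - l') v))"
  proof -
    have "lin_ext (tensid_phi_word l') (rmul (NF (rep (F v))) v)
        = rmul (NF (rmul (rep (F v)) (take (l - l') v))) (drop (l - l') v)" if v: "v \<in> words l" for v
      using v l tensid_phi_rmul[OF NF_TV[OF QT], of l' v] NF_rmul_NF[OF QT] by (simp add: words_def)
    then show ?thesis unfolding lincomb_def by (intro ext sum.cong refl) simp
  qed
  finally show ?thesis .
qed

lemma phin_dK_eq:
  assumes F: "F \<in> AJ N R n"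
  defines "l \<equiv> lN N n" and "l' \<equiv> lN N (n - 1)"
  shows "phin R l' (dK N R n F) = (\<lambda>x. \<Sum>w2\<in>words l'. \<Sum>w1\<in>words (l - l').
      rmul (NF (rmul (rep (F (w1 @ w2))) (take (l - l') (w1 @ w2)))) (drop (l - l') (w1 @ w2)) x)"
proof -
  have QT: "rep (F v) \<in> TV" for v using AJ_rep[OF F] by blast
  have "phibar R (dK N R n F w2) = lincomb (words (l - l')) (\<lambda>_. 1) (\<lambda>w1. NF (rmul (rep (F (w1 @ w2))) w1))"
    if w2: "w2 \<in> words l'" for w2
  proof -
    define D where "D = lincomb (words (l - l')) (\<lambda>_. 1) (\<lambda>w1. rmul (rep (F (w1 @ w2))) w1)"
    have DT: "D \<in> TV"
      unfolding D_def by (rule lincomb_TV[OF finite_words]) (use QT in \<open>auto intro: rmul_TV\<close>)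
    have "dK N R n F w2 = cls N R D"
      using w2 unfolding dK_def D_def l'_def l_def by (simp add: words_def lincomb_def cat_wd_right)
    then have "phibar R (dK N R n F w2) = NF D" using phibar_cls[OF DT] by simp
    also have "\<dots> = lincomb (words (l - l')) (\<lambda>_. 1) (\<lambda>w1. NF (rmul (rep (F (w1 @ w2))) w1))"
      unfolding D_def by (rule NF_lincomb[OF finite_words]) (use QT in \<open>auto intro: rmul_TV\<close>)
    finally show ?thesis .
  qed
  then have "phin R l' (dK N R n F) = (\<lambda>x. \<Sum>w2\<in>words l'.
      rmul (lincomb (words (l - l')) (\<lambda>_. 1) (\<lambda>w1. NF (rmul (rep (F (w1 @ w2))) w1))) w2 x)"
    unfolding phin_def cat_wd_right by (intro ext sum.cong refl) simp
  then show ?thesis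
    unfolding rmul_lincomb by (simp add: lincomb_def words_def)
qed

lemma phin_dK:
  assumes F: "F \<in> AJ N R n" and n: "1 \<le> n"
  shows "phin R (lN N (n - 1)) (dK N R n F) = tensid (phi R) (lN N (n - 1)) (phin R (lN N n) F)"
proof -
  define l l' where "l = lN N n" and "l' = lN N (n - 1)"
  have ll: "l' \<le> l" unfolding l_def l'_def using lN_le_Suc[OF n] N_ge_2 by simp
  then have eq: "l - l' + l' = l" by simp
  have "tensid (phi R) l' (phin R l F) = (\<lambda>x. \<Sum>v\<in>words (l - l' + l').
      1 * rmul (NF (rmul (rep (F v)) (take (l - l') v))) (drop (l - l') v) x)"
    unfolding eq tensid_phi_phin[OF F ll] lincomb_def ..
  also have "\<dots> = phin R l' (dK N R n F)"
    unfolding sum_words_append mult_1_left phin_dK_eq[OF F] l_def l'_def ..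
  finally show ?thesis unfolding l_def l'_def ..
qed

lemma J_hom: "1 \<le> n \<Longrightarrow> J N R n \<subseteq> hom (lN N n)"
proof -
  assume n: "1 \<le> n"
  consider "n = 1" | "n = 2" | "n \<ge> 3" using n by linarith
  then show ?thesis
  proof cases
    case 1
    then show ?thesis by (simp add: J_def lN_def)
  next
    case 2
    have "Rbar R \<subseteq> hom N"
      unfolding Rbar_def using lspan_hom rel_hom by blast
    then show ?thesis using 2 by (simp add: J_def lN_def)
  next
    case 3
    let ?l = "lN N n"
    show ?thesis
    proof
      fix f assume fJ: "f \<in> J N R n"
      have "f \<in> tensp (tensp (hom 0) (Rbar R)) (hom (?l - N - 0))"
        using fJ 3 unfolding J_def by (auto dest: bspec[where x = 0])
      then have "f \<in> lspan (Icomp_gens ?l)" by (intro lspan_gen UN_I[of 0]) auto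
      then have "f \<in> lspan (rel_sandwiches ?l)"
        using lN_ge[of n N] 3 by (intro Icomp_gens_span_rel_sandwiches) simp_all
      then show "f \<in> hom ?l" using rel_sandwiches_kernel by blast
    qed
  qed
qed

lemma cat_eq_lincomb_rmul: "(q :: ('x,'k) tv) \<in> hom l \<Longrightarrow> cat p q = lincomb (words l) q (\<lambda>v. rmul p v)"
proof -
  assume q: "q \<in> hom l"
  then have qT: "q \<in> TV" using hom_subset_TV by blast
  have fin: "finite (words l :: 'x list set)" by (rule finite_words)
  have "cat p q = lincomb (supp q) q (\<lambda>v. rmul p v)"
    by (subst TV_expand[OF qT]) (simp add: cat_lincomb_right cat_wd_right)
  also have "\<dots> = lincomb (words l) q (\<lambda>v. rmul p v)"
    unfolding lincomb_def
    by (rule ext, rule sum.mono_neutral_left) (use q fin in \<open>auto simp: hom_def supp_def words_def\<close>)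
  finally show ?thesis .
qed

lemma phin_atspan_step:
  fixes c :: 'k
  assumes F: "F \<in> AJ N R n" and t: "t \<in> TV" and q: "q \<in> J N R n" and n: "1 \<le> n"
  defines "G \<equiv> etens N R (cls N R t) q"
  defines "F' \<equiv> \<lambda>v. cls N R (\<lambda>x. c * rep (G v) x + rep (F v) x)"
  shows "F' \<in> AJ N R n \<and> phin R (lN N n) F' = (\<lambda>x. c * cat (NF t) q x + phin R (lN N n) F x)"
proof -
  let ?l = "lN N n"
  have "G \<in> {etens N R a j | a j. a \<in> Aset N R \<and> j \<in> J N R n}"
    using t q by (auto simp: G_def Aset_def)
  then have F'A: "F' \<in> AJ N R n"
    unfolding F'_def using F unfolding AJ_def by (rule atspan.atspan_step[rotated])
  have ra: "rep (cls N R t) \<in> TV" "NF (rep (cls N R t)) = NF t" using rep_cls[OF t] by simp_all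
  have rG: "rep (G v) \<in> TV \<and> NF (rep (G v)) = (\<lambda>x. q v * NF t x)" for v
    using rep_cls[OF TV_smult[OF ra(1)]] NF_lin[OF ra(1) ra(1), of "q v" 0] ra(2)
    by (simp add: G_def etens_def)
  have rF: "rep (F v) \<in> TV" for v using AJ_rep[OF F] by blast
  have nF': "NF (rep (F' v)) = (\<lambda>x. c * (q v * NF t x) + NF (rep (F v)) x)" for v
  proof -
    have T: "(\<lambda>x. c * rep (G v) x + 1 * rep (F v) x) \<in> TV" using rG rF by (intro TV_lin) auto
    have "NF (rep (F' v)) = NF (\<lambda>x. c * rep (G v) x + 1 * rep (F v) x)"
      using rep_cls[OF T] by (simp add: F'_def)
    also have "\<dots> = (\<lambda>x. c * NF (rep (G v)) x + 1 * NF (rep (F v)) x)"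
      using NF_lin rG rF by blast
    finally show ?thesis using rG by simp
  qed
  have "phin R ?l F' = lincomb (words ?l) (\<lambda>_. 1) (\<lambda>v. rmul (NF (rep (F' v))) v)"
    by (rule phin_eq_lincomb[OF F'A])
  also have "\<dots> = (\<lambda>x. c * lincomb (words ?l) q (\<lambda>v. rmul (NF t) v) x
      + lincomb (words ?l) (\<lambda>_. 1) (\<lambda>v. rmul (NF (rep (F v))) v) x)"
    unfolding nF' lincomb_def
  proof (rule ext)
    fix x
    have "(\<Sum>v\<in>words ?l. 1 * rmul (\<lambda>x. c * (q v * NF t x) + NF (rep (F v)) x) v x)
        = (\<Sum>v\<in>words ?l. c * (q v * rmul (NF t) v x) + 1 * rmul (NF (rep (F v))) v x)"
      by (rule sum.cong) (auto simp: rmul_def)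
    then show "(\<Sum>v\<in>words ?l. 1 * rmul (\<lambda>x. c * (q v * NF t x) + NF (rep (F v)) x) v x)
        = c * (\<Sum>v\<in>words ?l. q v * rmul (NF t) v x) + (\<Sum>v\<in>words ?l. 1 * rmul (NF (rep (F v))) v x)"
      by (simp add: sum.distrib sum_distrib_left)
  qed
  also have "\<dots> = (\<lambda>x. c * cat (NF t) q x + phin R ?l F x)"
    using cat_eq_lincomb_rmul[of q ?l "NF t"] J_hom[OF n] q phin_eq_lincomb[OF F] by auto
  finally show ?thesis using F'A by blast
qed

lemma tensp_phi_J_in_image_phin:
  assumes f: "f \<in> tensp (phi R ` TV) (J N R n)" and n: "1 \<le> n"
  shows "\<exists>F\<in>AJ N R n. phin R (lN N n) F = f"
  using f unfolding tensp_def
proof (induction rule: lspan.induct)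
  case lspan_zero
  let ?F = "\<lambda>_::'x list. Azero N R"
  have FA: "?F \<in> AJ N R n" unfolding AJ_def by (rule atspan.atspan_zero)
  have "NF (rep (Azero N R)) = (\<lambda>_. 0)"
    using rep_cls[OF TV_zero] NF_zero by (simp add: Azero_def)
  then have "phin R (lN N n) ?F = (\<lambda>_. 0)"
    unfolding phin_eq_lincomb[OF FA] by (simp add: lincomb_def rmul_def)
  then show ?case using FA by blast
next
  case (lspan_step f g c)
  obtain F where F: "F \<in> AJ N R n" "phin R (lN N n) F = f" using lspan_step.IH by blast
  obtain t q where "g = cat (NF t) q" "t \<in> TV" "q \<in> J N R n"
    using lspan_step(2) phi_eq_NF by auto
  then show ?case using phin_atspan_step[OF F(1) _ _ n, of t q c] F(2) by blast
qed

end

theorem lemma3p3p3: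
  fixes R :: "('x::{finite,linorder}, 'k::field) tv set" and N :: nat
  assumes "N \<ge> 2"
    and "presentation N R"
    and "side_confluent N R"
  shows "(\<forall>m. reduction_operator m (phi R) \<and> {f \<in> hom m. phi R f = (\<lambda>_. 0)} = Icomp N R m)
       \<and> (\<forall>n\<ge>1. \<forall>f\<in>tensp (phi R ` TV) (J N R n).
            dprime N R n f = tensid (phi R) (lN N (n - 1)) f)"
proof -
  interpret side_confluent_presentation N R
    using assms by unfold_locales auto
  have "dprime N R n f = tensid (phi R) (lN N (n - 1)) f"
    if n: "1 \<le> n" and f: "f \<in> tensp (phi R ` TV) (J N R n)" for n f
  proof -
    let ?F = "inv_into (AJ N R n) (phin R (lN N n)) f"
    have "f \<in> phin R (lN N n) ` AJ N R n"
      using tensp_phi_J_in_image_phin[OF f n] by blast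
    then have "?F \<in> AJ N R n" "phin R (lN N n) ?F = f"
      by (rule inv_into_into, rule f_inv_into_f)
    then show ?thesis
      unfolding dprime_def using phin_dK[OF _ n] by metis
  qed
  then show ?thesis
    using phi_reduction_operator phi_kernel by blast
qed

end
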